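(* Let $G=(V,E)$ be a cycle on $2n+1$ vertices with $n\ge 1$. Then the acyclic orientations of $E$ whose induced posets have the maximum number of linear extensions (among all acyclic orientations of $E$) are exactly the almost bipartite orientations.
   Context: An acyclic orientation of $E$ induces a partial order on $V$ in which $u<v$ if and only if there is a directed path from $u$ to $v$. A linear extension of a partial order $P$ on an $m$-element set $V$ is a bijection $\sigma:V\to[m]$ such that $u<_P v$ implies $\sigma(u)<\sigma(v)$. An acyclic orientation of an odd cycle is called almost bipartite if it contains exactly one directed $2$-path, i.e. exactly one instance of directed edges $(u,v)$ and $(v,w)$ with $u,v,w\in V$. *)

theory Defs
  imports "HOL-Library.FuncSet"
begin

definition cycle_vertices :: "nat \<Rightarrow> nat set" where
  "cycle_vertices m = {0..<m}"

definition cycle_edges :: "nat \<Rightarrow> nat set set" where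
  "cycle_edges m = {{i, Suc i mod m} | i. i < m}"

definition is_orientation :: "'a set set \<Rightarrow> ('a \<times> 'a) set \<Rightarrow> bool" where
  "is_orientation E D \<longleftrightarrow>
     (\<forall>(u,v)\<in>D. {u,v} \<in> E) \<and>
     (\<forall>e\<in>E. \<exists>u v. e = {u,v} \<and> u \<noteq> v \<and>
        (((u,v) \<in> D \<and> (v,u) \<notin> D) \<or> ((v,u) \<in> D \<and> (u,v) \<notin> D)))"

definition acyclic_orientation :: "'a set set \<Rightarrow> ('a \<times> 'a) set \<Rightarrow> bool" where
  "acyclic_orientation E D \<longleftrightarrow> is_orientation E D \<and> acyclic D"

text \<open>Linear extensions of the poset induced by D on V (u < v iff directed path
  from u to v, i.e. (u,v) in the transitive closure of D): bijections
  V \<rightarrow> {1..card V} respecting the order; taken extensional so they are counted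
  as functions on V.\<close>
definition linear_extensions :: "'a set \<Rightarrow> ('a \<times> 'a) set \<Rightarrow> ('a \<Rightarrow> nat) set" where
  "linear_extensions V D =
     {\<sigma> \<in> extensional V. bij_betw \<sigma> V {1..card V} \<and>
        (\<forall>u\<in>V. \<forall>v\<in>V. (u,v) \<in> D\<^sup>+ \<longrightarrow> \<sigma> u < \<sigma> v)}"

definition num_linear_extensions :: "'a set \<Rightarrow> ('a \<times> 'a) set \<Rightarrow> nat" where
  "num_linear_extensions V D = card (linear_extensions V D)"

definition directed_2paths :: "('a \<times> 'a) set \<Rightarrow> ('a \<times> 'a \<times> 'a) set" where
  "directed_2paths D = {(u,v,w). (u,v) \<in> D \<and> (v,w) \<in> D}"

definition almost_bipartite :: "'a set set \<Rightarrow> ('a \<times> 'a) set \<Rightarrow> bool" where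
  "almost_bipartite E D \<longleftrightarrow> acyclic_orientation E D \<and> card (directed_2paths D) = 1"

end

theory Submission
  imports Defs Complex_Main
begin

(*
  The number e(R) of linear extensions of a strict order R on an m-element set V is recovered
  from lattice point counts.  The strictly order preserving maps V -> {1..k} (points of the
  dilated order polytope) number e(R) (k choose m) + O(k^(m-1)), and Stanley's transfer map is a
  bijection between them and the maps V -> {1..k} with all chain sums at most k (points of the
  dilated chain polytope).  The chain polytope only grows when comparabilities are removed;
  comparing leading coefficients gives e(R) <= e(R') whenever every comparability of R' is one
  of R, strictly if Omega(t^m) extra points appear at scale O(t).

  On an odd cycle every acyclic orientation has a centre, i.e. the middle vertex of a directed
  2-path.  The almost bipartite orientation centred at c has as comparabilities only the edges
  and the two neighbours of c, which every orientation with centre c has as well.  So it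
  dominates every orientation with centre c, it is equivalent to every almost bipartite one
  centred at c, it strictly dominates orientations with a second centre, and by rotation all
  almost bipartite orientations have the same count.
*)

definition strict_order_on :: "'a set \<Rightarrow> ('a \<times> 'a) set \<Rightarrow> bool" where
  "strict_order_on V R \<longleftrightarrow> R \<subseteq> V \<times> V \<and> trans R \<and> irrefl R"

definition lin_exts :: "'a set \<Rightarrow> ('a \<times> 'a) set \<Rightarrow> ('a \<Rightarrow> nat) set" where
  "lin_exts V R = {\<sigma> \<in> extensional V. bij_betw \<sigma> V {1..card V} \<and>
        (\<forall>u\<in>V. \<forall>v\<in>V. (u,v) \<in> R \<longrightarrow> \<sigma> u < \<sigma> v)}"

definition is_chain :: "('a \<times> 'a) set \<Rightarrow> 'a set \<Rightarrow> bool" where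
  "is_chain R C \<longleftrightarrow> (\<forall>x\<in>C. \<forall>y\<in>C. x \<noteq> y \<longrightarrow> (x,y) \<in> R \<or> (y,x) \<in> R)"

text \<open>Lattice points of the (dilated, open) order polytope: strictly order preserving maps
  \<open>V \<rightarrow> {1..k}\<close>.\<close>
definition strict_maps :: "'a set \<Rightarrow> ('a \<times> 'a) set \<Rightarrow> nat \<Rightarrow> ('a \<Rightarrow> nat) set" where
  "strict_maps V R k = {f \<in> V \<rightarrow>\<^sub>E {1..k}. \<forall>u v. (u,v) \<in> R \<longrightarrow> f u < f v}"

text \<open>Lattice points of the (dilated) chain polytope: positive maps whose sum over every
  chain is at most \<open>k\<close>.\<close>
definition chain_maps :: "'a set \<Rightarrow> ('a \<times> 'a) set \<Rightarrow> nat \<Rightarrow> ('a \<Rightarrow> nat) set" where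
  "chain_maps V R k = {g \<in> V \<rightarrow>\<^sub>E {1..k}. \<forall>C. C \<subseteq> V \<longrightarrow> is_chain R C \<longrightarrow> sum g C \<le> k}"

lemma num_linear_extensions_eq: "num_linear_extensions V D = card (lin_exts V (D\<^sup>+))"
  unfolding num_linear_extensions_def linear_extensions_def lin_exts_def ..

lemma strict_order_trancl:
  assumes "D \<subseteq> V \<times> V" and "acyclic D"
  shows "strict_order_on V (D\<^sup>+)"
  using assms trancl_subset_Sigma[OF assms(1)]
  unfolding strict_order_on_def acyclic_def irrefl_def by (simp add: trans_trancl)

lemma strict_order_wf:
  assumes "finite V" and "strict_order_on V R"
  shows "wf R"
proof (rule finite_acyclic_wf)
  show "finite R"
    using assms finite_subset[of R "V \<times> V"] unfolding strict_order_on_def by blast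
  show "acyclic R"
    using assms(2) trancl_id[of R] unfolding strict_order_on_def acyclic_def irrefl_def by simp
qed

lemma finite_strict_maps: "finite V \<Longrightarrow> finite (strict_maps V R k)"
  unfolding strict_maps_def by (rule finite_subset[of _ "V \<rightarrow>\<^sub>E {1..k}"]) (auto intro: finite_PiE)

lemma finite_chain_maps: "finite V \<Longrightarrow> finite (chain_maps V R k)"
  unfolding chain_maps_def by (rule finite_subset[of _ "V \<rightarrow>\<^sub>E {1..k}"]) (auto intro: finite_PiE)

lemma finite_lin_exts: "finite V \<Longrightarrow> finite (lin_exts V R)"
proof -
  assume "finite V"
  moreover have "lin_exts V R \<subseteq> V \<rightarrow>\<^sub>E {1..card V}"
    unfolding lin_exts_def by (auto simp: PiE_iff bij_betw_def extensional_def)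
  ultimately show ?thesis by (meson finite_PiE finite_atLeastAtMost finite_subset)
qed

lemma chain_has_top:
  assumes "trans R" and "finite C" and "C \<noteq> {}" and "is_chain R C"
  shows "\<exists>t\<in>C. \<forall>x\<in>C. x = t \<or> (x,t) \<in> R"
  using assms(2-4)
proof (induction C rule: finite_ne_induct)
  case (singleton x) then show ?case by auto
next
  case (insert x F)
  have "is_chain R F" using insert.prems unfolding is_chain_def by auto
  then obtain t where t: "t \<in> F" "\<forall>y\<in>F. y = t \<or> (y,t) \<in> R" using insert.IH by auto
  have "x \<noteq> t" using insert.hyps t by auto
  then have "(x,t) \<in> R \<or> (t,x) \<in> R" using insert.prems t unfolding is_chain_def by auto
  then show ?case
  proof
    assume "(x,t) \<in> R" then show ?case using t by auto
  next
    assume "(t,x) \<in> R"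
    then have "\<forall>y\<in>insert x F. y = x \<or> (y,x) \<in> R" using t assms(1) by (auto dest: transD)
    then show ?case by auto
  qed
qed

section \<open>Stanley's transfer map between order and chain polytope\<close>

text \<open>The largest value of \<open>f\<close> strictly below \<open>v\<close> (or \<open>0\<close>).  The transfer map sends \<open>f\<close> to
  \<open>v \<mapsto> f v - pred_max V R f v\<close>.\<close>
definition pred_max :: "'a set \<Rightarrow> ('a \<times> 'a) set \<Rightarrow> ('a \<Rightarrow> nat) \<Rightarrow> 'a \<Rightarrow> nat" where
  "pred_max V R f v = Max (insert 0 (f ` {u\<in>V. (u,v) \<in> R}))"

lemma pred_max_ge: "finite V \<Longrightarrow> u \<in> V \<Longrightarrow> (u,v) \<in> R \<Longrightarrow> f u \<le> pred_max V R f v"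
  unfolding pred_max_def by (rule Max_ge) auto

lemma pred_max_less:
  assumes "finite V" and "f \<in> strict_maps V R k" and "v \<in> V"
  shows "pred_max V R f v < f v"
proof -
  have "\<forall>x \<in> insert 0 (f ` {u\<in>V. (u,v) \<in> R}). x < f v"
    using assms(2,3) unfolding strict_maps_def by (auto simp: PiE_iff)
  then show ?thesis unfolding pred_max_def using assms(1) by simp
qed

text \<open>Along a chain with top \<open>t\<close> the increments \<open>f v - pred_max V R f v\<close> telescope to at
  most \<open>f t\<close>.\<close>
lemma chain_increments_le:
  assumes fin: "finite V" and tr: "trans R" and f: "f \<in> strict_maps V R k"
  shows "finite C \<Longrightarrow> C \<subseteq> V \<Longrightarrow> is_chain R C \<Longrightarrow> t \<in> C \<Longrightarrow> (\<forall>x\<in>C. x = t \<or> (x,t) \<in> R)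
     \<Longrightarrow> (\<Sum>v\<in>C. f v - pred_max V R f v) \<le> f t"
proof (induction "card C" arbitrary: C t rule: less_induct)
  case less
  let ?g = "\<lambda>v. f v - pred_max V R f v"
  define C' where "C' = C - {t}"
  have sum_split: "sum ?g C = ?g t + sum ?g C'"
    unfolding C'_def using less.prems by (simp add: sum.remove)
  show ?case
  proof (cases "C' = {}")
    case True
    then show ?thesis using sum_split by simp
  next
    case False
    have chain': "is_chain R C'" using less.prems(3) unfolding is_chain_def C'_def by auto
    obtain t' where t': "t' \<in> C'" "\<forall>x\<in>C'. x = t' \<or> (x,t') \<in> R"
      using chain_has_top[OF tr _ False chain'] less.prems(1) C'_def by auto
    have "card C' < card C" unfolding C'_def using less.prems by (meson card_Diff1_less)
    then have IH: "sum ?g C' \<le> f t'"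
      using less.hyps[of C' t'] less.prems t' chain' C'_def by auto
    have "(t',t) \<in> R" and "t' \<in> V" using less.prems(2,5) t' C'_def by auto
    then have "f t' \<le> pred_max V R f t" using pred_max_ge[OF fin] by blast
    moreover have "pred_max V R f t < f t" using pred_max_less[OF fin f] less.prems by auto
    ultimately show ?thesis using sum_split IH by linarith
  qed
qed

lemma transfer_in_chain_maps:
  assumes fin: "finite V" and tr: "trans R" and f: "f \<in> strict_maps V R k"
  shows "restrict (\<lambda>v. f v - pred_max V R f v) V \<in> chain_maps V R k"
proof -
  let ?T = "restrict (\<lambda>v. f v - pred_max V R f v) V"
  have "f v - pred_max V R f v \<in> {1..k}" if "v \<in> V" for v
    using pred_max_less[OF fin f that] f that unfolding strict_maps_def by (force simp: PiE_iff)
  then have "?T \<in> V \<rightarrow>\<^sub>E {1..k}" by auto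
  moreover have "sum ?T C \<le> k" if C: "C \<subseteq> V" "is_chain R C" for C
  proof (cases "C = {}")
    case False
    have finC: "finite C" using C fin finite_subset by auto
    obtain t where t: "t \<in> C" "\<forall>x\<in>C. x = t \<or> (x,t) \<in> R"
      using chain_has_top[OF tr finC False C(2)] by auto
    have "sum ?T C = (\<Sum>v\<in>C. f v - pred_max V R f v)" using C by (intro sum.cong) auto
    also have "\<dots> \<le> f t" using chain_increments_le[OF fin tr f finC C t] .
    also have "\<dots> \<le> k" using f t C unfolding strict_maps_def by (auto simp: PiE_iff)
    finally show ?thesis .
  qed simp
  ultimately show ?thesis unfolding chain_maps_def by auto
qed

text \<open>The transfer map is injective: by well-founded induction, \<open>f v\<close> is recovered as the
  increment at \<open>v\<close> plus the maximum of \<open>f\<close> below \<open>v\<close>.\<close>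
lemma transfer_inj:
  assumes fin: "finite V" and wf: "wf R"
  shows "inj_on (\<lambda>f. restrict (\<lambda>v. f v - pred_max V R f v) V) (strict_maps V R k)"
proof (rule inj_onI)
  fix f1 f2 assume f1: "f1 \<in> strict_maps V R k" and f2: "f2 \<in> strict_maps V R k"
    and eq: "restrict (\<lambda>v. f1 v - pred_max V R f1 v) V = restrict (\<lambda>v. f2 v - pred_max V R f2 v) V"
  have "v \<in> V \<longrightarrow> f1 v = f2 v" for v
  proof (induction v rule: wf_induct[OF wf])
    case (1 v)
    show ?case
    proof
      assume v: "v \<in> V"
      have "f1 ` {u\<in>V. (u,v) \<in> R} = f2 ` {u\<in>V. (u,v) \<in> R}"
        using 1 by (intro image_cong) auto
      then have "pred_max V R f1 v = pred_max V R f2 v" unfolding pred_max_def by simp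
      moreover have "f1 v - pred_max V R f1 v = f2 v - pred_max V R f2 v"
        using fun_cong[OF eq, of v] v by simp
      ultimately show "f1 v = f2 v"
        using pred_max_less[OF fin f1 v] pred_max_less[OF fin f2 v] by linarith
    qed
  qed
  then show "f1 = f2"
    using f1 f2 unfolding strict_maps_def by (auto simp: PiE_iff intro!: extensionalityI)
qed

lemma card_strict_maps_le_chain_maps:
  assumes fin: "finite V" and R: "strict_order_on V R"
  shows "card (strict_maps V R k) \<le> card (chain_maps V R k)"
proof (rule card_inj_on_le[OF transfer_inj[OF fin strict_order_wf[OF fin R]]])
  show "(\<lambda>f. restrict (\<lambda>v. f v - pred_max V R f v) V) ` strict_maps V R k \<subseteq> chain_maps V R k"
    using transfer_in_chain_maps[OF fin] R unfolding strict_order_on_def by blast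
qed (rule finite_chain_maps[OF fin])

text \<open>The inverse transfer map sends \<open>g\<close> to \<open>v \<mapsto>\<close> maximal \<open>g\<close>-weight of a chain topped by \<open>v\<close>.\<close>
definition chains_below :: "'a set \<Rightarrow> ('a \<times> 'a) set \<Rightarrow> 'a \<Rightarrow> 'a set set" where
  "chains_below V R v = {C. C \<subseteq> V \<and> is_chain R C \<and> v \<in> C \<and> (\<forall>x\<in>C. x = v \<or> (x,v) \<in> R)}"

definition chain_weight :: "'a set \<Rightarrow> ('a \<times> 'a) set \<Rightarrow> ('a \<Rightarrow> nat) \<Rightarrow> 'a \<Rightarrow> nat" where
  "chain_weight V R g v = Max (sum g ` chains_below V R v)"

lemma finite_chains_below: "finite V \<Longrightarrow> finite (chains_below V R v)"
  unfolding chains_below_def by (rule finite_subset[of _ "Pow V"]) auto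

lemma singleton_chain_below: "v \<in> V \<Longrightarrow> {v} \<in> chains_below V R v"
  unfolding chains_below_def is_chain_def by auto

lemma chain_weight_ge: "finite V \<Longrightarrow> C \<in> chains_below V R v \<Longrightarrow> sum g C \<le> chain_weight V R g v"
  unfolding chain_weight_def by (rule Max_ge) (auto simp: finite_chains_below)

lemma chain_weight_attained:
  assumes "finite V" and "v \<in> V"
  obtains C where "C \<in> chains_below V R v" "chain_weight V R g v = sum g C"
proof -
  have "chain_weight V R g v \<in> sum g ` chains_below V R v"
    unfolding chain_weight_def using assms
    by (intro Max_in) (auto simp: finite_chains_below dest: singleton_chain_below)
  then show ?thesis using that by auto
qed

text \<open>Recursion for the chain weight: \<open>v\<close>'s own weight plus the best weight below \<open>v\<close>.\<close>
abbreviation pred_weight :: "'a set \<Rightarrow> ('a \<times> 'a) set \<Rightarrow> ('a \<Rightarrow> nat) \<Rightarrow> 'a \<Rightarrow> nat" where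
  "pred_weight V R g v \<equiv> Max (insert 0 (chain_weight V R g ` {u\<in>V. (u,v) \<in> R}))"

lemma chain_weight_le_rec:
  assumes fin: "finite V" and tr: "trans R" and RV: "R \<subseteq> V \<times> V" and v: "v \<in> V"
  shows "chain_weight V R g v \<le> g v + pred_weight V R g v"
proof -
  obtain C where C: "C \<in> chains_below V R v" "chain_weight V R g v = sum g C"
    using chain_weight_attained[OF fin v] by blast
  have finC: "finite C" using C fin unfolding chains_below_def by (auto intro: finite_subset)
  define C' where "C' = C - {v}"
  have sum_split: "sum g C = g v + sum g C'"
    unfolding C'_def using C finC unfolding chains_below_def by (simp add: sum.remove)
  show ?thesis
  proof (cases "C' = {}")
    case True then show ?thesis using C sum_split by simp
  next
    case False
    have chain': "is_chain R C'" using C unfolding chains_below_def is_chain_def C'_def by auto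
    obtain u where u: "u \<in> C'" "\<forall>x\<in>C'. x = u \<or> (x,u) \<in> R"
      using chain_has_top[OF tr _ False chain'] finC C'_def by auto
    have uv: "(u,v) \<in> R" and uV: "u \<in> V" using u C RV unfolding chains_below_def C'_def by auto
    have "C' \<in> chains_below V R u" using u chain' C unfolding chains_below_def C'_def by auto
    then have "sum g C' \<le> chain_weight V R g u" using chain_weight_ge[OF fin] by auto
    also have "\<dots> \<le> pred_weight V R g v" using uv uV fin by (intro Max_ge) auto
    finally show ?thesis using C sum_split by simp
  qed
qed

lemma chain_weight_ge_rec:
  assumes fin: "finite V" and R: "strict_order_on V R" and v: "v \<in> V"
  shows "g v + pred_weight V R g v \<le> chain_weight V R g v"
proof -
  have tr: "trans R" and irr: "\<And>x. (x,x) \<notin> R"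
    using R unfolding strict_order_on_def irrefl_def by auto
  have "g v + y \<le> chain_weight V R g v" if "y \<in> insert 0 (chain_weight V R g ` {u\<in>V. (u,v) \<in> R})" for y
  proof -
    from that consider "y = 0" | u where "u \<in> V" "(u,v) \<in> R" "y = chain_weight V R g u" by auto
    then show ?thesis
    proof cases
      case 1 then show ?thesis using chain_weight_ge[OF fin singleton_chain_below[OF v, of R], of g] by simp
    next
      case 2
      obtain C where C: "C \<in> chains_below V R u" "chain_weight V R g u = sum g C"
        using chain_weight_attained[OF fin 2(1)] by blast
      have finC: "finite C" using C fin unfolding chains_below_def by (auto intro: finite_subset)
      have "v \<notin> C"
      proof
        assume "v \<in> C"
        then have "v = u \<or> (v,u) \<in> R" using C unfolding chains_below_def by auto
        then show False using 2 irr tr by (auto dest: transD)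
      qed
      moreover have "insert v C \<in> chains_below V R v"
        using C 2 v tr unfolding chains_below_def is_chain_def by (auto dest: transD)
      ultimately show ?thesis using chain_weight_ge[OF fin, of "insert v C"] 2 C finC by simp
    qed
  qed
  moreover have "pred_weight V R g v \<in> insert 0 (chain_weight V R g ` {u\<in>V. (u,v) \<in> R})"
    using fin by (intro Max_in) auto
  ultimately show ?thesis by blast
qed

lemma chain_weight_rec:
  assumes "finite V" and R: "strict_order_on V R" and "v \<in> V"
  shows "chain_weight V R g v = g v + pred_weight V R g v"
proof (rule antisym)
  show "chain_weight V R g v \<le> g v + pred_weight V R g v"
    using R by (intro chain_weight_le_rec[OF assms(1) _ _ assms(3)]) (auto simp: strict_order_on_def)
  show "g v + pred_weight V R g v \<le> chain_weight V R g v" by (rule chain_weight_ge_rec[OF assms])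
qed

lemma chain_weight_in_strict_maps:
  assumes fin: "finite V" and R: "strict_order_on V R" and g: "g \<in> chain_maps V R k"
  shows "restrict (chain_weight V R g) V \<in> strict_maps V R k"
proof -
  have RV: "R \<subseteq> V \<times> V" using R unfolding strict_order_on_def by auto
  have pos: "g v \<ge> 1" if "v \<in> V" for v using g that unfolding chain_maps_def by (auto simp: PiE_iff)
  have "chain_weight V R g v \<in> {1..k}" if v: "v \<in> V" for v
  proof -
    have "1 \<le> chain_weight V R g v"
      using pos[OF v] chain_weight_ge[OF fin singleton_chain_below[OF v, of R], of g] by simp
    moreover obtain C where C: "C \<in> chains_below V R v" "chain_weight V R g v = sum g C"
      using chain_weight_attained[OF fin v] by blast
    then have "sum g C \<le> k" using g unfolding chain_maps_def chains_below_def by auto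
    ultimately show ?thesis using C by auto
  qed
  moreover have "chain_weight V R g u < chain_weight V R g v" if uv: "(u,v) \<in> R" for u v
  proof -
    have V: "u \<in> V" "v \<in> V" using uv RV by auto
    have "chain_weight V R g u \<le> pred_weight V R g v" using fin V uv by (intro Max_ge) auto
    then show ?thesis using chain_weight_rec[OF fin R V(2), of g] pos[OF V(2)] by linarith
  qed
  ultimately show ?thesis using RV unfolding strict_maps_def by auto
qed

text \<open>The inverse transfer map is injective: \<open>g v\<close> is the chain weight at \<open>v\<close> minus the best
  chain weight below \<open>v\<close>.\<close>
lemma chain_weight_inj:
  assumes fin: "finite V" and R: "strict_order_on V R"
  shows "inj_on (\<lambda>g. restrict (chain_weight V R g) V) (chain_maps V R k)"
proof (rule inj_onI)
  fix g1 g2 assume g1: "g1 \<in> chain_maps V R k" and g2: "g2 \<in> chain_maps V R k"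
    and eq: "restrict (chain_weight V R g1) V = restrict (chain_weight V R g2) V"
  have same: "chain_weight V R g1 u = chain_weight V R g2 u" if "u \<in> V" for u
    using fun_cong[OF eq, of u] that by simp
  have "g1 v = g2 v" if v: "v \<in> V" for v
  proof -
    have "chain_weight V R g1 ` {u\<in>V. (u,v) \<in> R} = chain_weight V R g2 ` {u\<in>V. (u,v) \<in> R}"
      using same by (intro image_cong) auto
    then show ?thesis
      using chain_weight_rec[OF fin R v, of g1] chain_weight_rec[OF fin R v, of g2] same[OF v] by simp
  qed
  then show "g1 = g2"
    using g1 g2 unfolding chain_maps_def by (auto simp: PiE_iff intro!: extensionalityI)
qed

lemma card_chain_maps_le_strict_maps:
  assumes fin: "finite V" and R: "strict_order_on V R"
  shows "card (chain_maps V R k) \<le> card (strict_maps V R k)"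
proof (rule card_inj_on_le[OF chain_weight_inj[OF fin R]])
  show "(\<lambda>g. restrict (chain_weight V R g) V) ` chain_maps V R k \<subseteq> strict_maps V R k"
    using chain_weight_in_strict_maps[OF fin R] by blast
qed (rule finite_strict_maps[OF fin])

lemma card_strict_maps_eq_chain_maps:
  assumes "finite V" and "strict_order_on V R"
  shows "card (strict_maps V R k) = card (chain_maps V R k)"
  by (rule antisym[OF card_strict_maps_le_chain_maps[OF assms] card_chain_maps_le_strict_maps[OF assms]])

lemma chain_maps_antimono:
  assumes "\<And>x y. (x,y) \<in> R' \<Longrightarrow> (x,y) \<in> R \<or> (y,x) \<in> R"
  shows "chain_maps V R k \<subseteq> chain_maps V R' k"
proof -
  have "is_chain R C" if "is_chain R' C" for C using that assms unfolding is_chain_def by blast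
  then show ?thesis unfolding chain_maps_def by auto
qed

section \<open>Counting order-polytope points through linear extensions\<close>

lemma lin_ext_range:
  assumes "\<sigma> \<in> lin_exts V R" and "v \<in> V"
  shows "1 \<le> \<sigma> v \<and> \<sigma> v - 1 < card V"
proof -
  have "bij_betw \<sigma> V {1..card V}" using assms(1) unfolding lin_exts_def by simp
  then have "\<sigma> v \<in> {1..card V}" using assms(2) by (rule bij_betw_apply)
  then show ?thesis by auto
qed

lemma lin_ext_shifted_image:
  assumes "\<sigma> \<in> lin_exts V R"
  shows "(\<lambda>v. \<sigma> v - 1) ` V = {..<card V}"
proof -
  have shift: "{..<card V} = (\<lambda>i. i - 1) ` {1..card V}"
    by (auto simp: image_iff intro!: bexI[where x="Suc _"])
  have "\<sigma> ` V = {1..card V}" using assms unfolding lin_exts_def bij_betw_def by simp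
  moreover have "(\<lambda>v. \<sigma> v - 1) ` V = (\<lambda>i. i - 1) ` (\<sigma> ` V)" by (simp add: image_image)
  ultimately show ?thesis using shift by simp
qed

definition place :: "'a set \<Rightarrow> ('a \<Rightarrow> nat) \<Rightarrow> nat set \<Rightarrow> 'a \<Rightarrow> nat" where
  "place V \<sigma> S = restrict (\<lambda>v. sorted_list_of_set S ! (\<sigma> v - 1)) V"

lemma place_strict:
  assumes RV: "R \<subseteq> V \<times> V" and \<sigma>: "\<sigma> \<in> lin_exts V R" and S: "S \<subseteq> {1..k}" "card S = card V"
  shows "place V \<sigma> S \<in> strict_maps V R k"
proof -
  let ?xs = "sorted_list_of_set S"
  have finS: "finite S" using S(1) finite_subset by auto
  then have len: "length ?xs = card V" and set_xs: "set ?xs = S" using S by simp_all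
  have "?xs ! (\<sigma> v - 1) \<in> {1..k}" if "v \<in> V" for v
    using lin_ext_range[OF \<sigma> that] len set_xs S(1) by (metis nth_mem subsetD)
  moreover have "?xs ! (\<sigma> u - 1) < ?xs ! (\<sigma> v - 1)" if "(u,v) \<in> R" for u v
  proof -
    have V: "u \<in> V" "v \<in> V" using that RV by auto
    have "\<sigma> u < \<sigma> v" using \<sigma> V that unfolding lin_exts_def by auto
    then have "\<sigma> u - 1 < \<sigma> v - 1" using lin_ext_range[OF \<sigma> V(1)] by auto
    then show ?thesis
      using sorted_wrt_nth_less[OF strict_sorted_list_of_set[of S]] lin_ext_range[OF \<sigma> V(2)] len
      by auto
  qed
  ultimately show ?thesis using RV unfolding strict_maps_def place_def by auto
qed

lemma place_image:
  assumes \<sigma>: "\<sigma> \<in> lin_exts V R" and S: "finite S" "card S = card V"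
  shows "place V \<sigma> S ` V = S"
proof -
  have "place V \<sigma> S ` V = (\<lambda>i. sorted_list_of_set S ! i) ` ((\<lambda>v. \<sigma> v - 1) ` V)"
    unfolding place_def by (auto simp: image_iff)
  also have "\<dots> = set (sorted_list_of_set S)"
    using lin_ext_shifted_image[OF \<sigma>] S by (auto simp: set_conv_nth image_iff)
  finally show ?thesis using S by simp
qed

lemma place_inj:
  assumes \<sigma>1: "\<sigma>1 \<in> lin_exts V R" and \<sigma>2: "\<sigma>2 \<in> lin_exts V R"
    and S: "finite S" "card S = card V" and eq: "place V \<sigma>1 S = place V \<sigma>2 S"
  shows "\<sigma>1 = \<sigma>2"
proof -
  have "\<sigma>1 v = \<sigma>2 v" if v: "v \<in> V" for v
  proof -
    let ?xs = "sorted_list_of_set S"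
    have "?xs ! (\<sigma>1 v - 1) = ?xs ! (\<sigma>2 v - 1)"
      using fun_cong[OF eq, of v] v unfolding place_def by simp
    then have "\<sigma>1 v - 1 = \<sigma>2 v - 1"
      using nth_eq_iff_index_eq[of ?xs] lin_ext_range[OF \<sigma>1 v] lin_ext_range[OF \<sigma>2 v] S by auto
    then show ?thesis using lin_ext_range[OF \<sigma>1 v] lin_ext_range[OF \<sigma>2 v] by auto
  qed
  then show ?thesis using \<sigma>1 \<sigma>2 unfolding lin_exts_def by (auto intro: extensionalityI)
qed

text \<open>Lower bound: distinct (linear extension, value set) pairs give distinct maps.\<close>
lemma card_lin_exts_binom_le_strict_maps:
  assumes fin: "finite V" and RV: "R \<subseteq> V \<times> V"
  shows "card (lin_exts V R) * (k choose card V) \<le> card (strict_maps V R k)"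
proof -
  let ?Sub = "{S. S \<subseteq> {1..k} \<and> card S = card V}"
  have "inj_on (\<lambda>(\<sigma>,S). place V \<sigma> S) (lin_exts V R \<times> ?Sub)"
  proof (rule inj_onI)
    fix p1 p2 assume p1: "p1 \<in> lin_exts V R \<times> ?Sub" and p2: "p2 \<in> lin_exts V R \<times> ?Sub"
      and eq: "(\<lambda>(\<sigma>,S). place V \<sigma> S) p1 = (\<lambda>(\<sigma>,S). place V \<sigma> S) p2"
    obtain \<sigma>1 S1 \<sigma>2 S2 where p: "p1 = (\<sigma>1,S1)" "p2 = (\<sigma>2,S2)" by (cases p1, cases p2)
    have \<sigma>: "\<sigma>1 \<in> lin_exts V R" "\<sigma>2 \<in> lin_exts V R"
      and S: "finite S1" "card S1 = card V" "finite S2" "card S2 = card V"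
      using p1 p2 p finite_subset[of _ "{1..k}"] by auto
    have "S1 = S2" using place_image[OF \<sigma>(1) S(1,2)] place_image[OF \<sigma>(2) S(3,4)] eq p by simp
    then show "p1 = p2" using place_inj[OF \<sigma> S(1,2)] eq p by simp
  qed
  then have "card (lin_exts V R \<times> ?Sub) \<le> card (strict_maps V R k)"
    by (rule card_inj_on_le) (use place_strict[OF RV] finite_strict_maps[OF fin] in auto)
  then show ?thesis by (simp add: card_cartesian_product n_subsets)
qed

lemma rank_inj:
  fixes x y :: "'b :: linorder"
  assumes "finite S" and "x \<in> S" and "y \<in> S" and "card {s\<in>S. s \<le> x} = card {s\<in>S. s \<le> y}"
  shows "x = y"
proof -
  have less: "card {s\<in>S. s \<le> a} < card {s\<in>S. s \<le> b}" if "a < b" "b \<in> S" for a b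
  proof (rule psubset_card_mono)
    have "b \<in> {s\<in>S. s \<le> b}" "b \<notin> {s\<in>S. s \<le> a}" using that by auto
    then show "{s\<in>S. s \<le> a} \<subset> {s\<in>S. s \<le> b}" using that by auto
  qed (use assms(1) in simp)
  show ?thesis using less[of x y] less[of y x] assms by (cases x y rule: linorder_cases) auto
qed

lemma rank_lin_ext:
  assumes fin: "finite V" and h: "h \<in> strict_maps V R k" and inj: "inj_on h V" and RV: "R \<subseteq> V \<times> V"
  shows "restrict (\<lambda>v. card {u\<in>V. h u \<le> h v}) V \<in> lin_exts V R"
proof -
  let ?r = "\<lambda>v. card {u\<in>V. h u \<le> h v}"
  have mono: "?r u < ?r v" if "u \<in> V" "v \<in> V" "h u < h v" for u v
  proof (rule psubset_card_mono)
    have "v \<in> {w\<in>V. h w \<le> h v}" "v \<notin> {w\<in>V. h w \<le> h u}" using that by auto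
    moreover have "{w\<in>V. h w \<le> h u} \<subseteq> {w\<in>V. h w \<le> h v}" using that by auto
    ultimately show "{w\<in>V. h w \<le> h u} \<subset> {w\<in>V. h w \<le> h v}" by blast
  qed (use fin in simp)
  have inj_r: "inj_on ?r V"
  proof (rule inj_onI)
    fix u v assume uv: "u \<in> V" "v \<in> V" "?r u = ?r v"
    show "u = v" using mono[of u v] mono[of v u] uv inj_onD[OF inj _ uv(1,2)]
      by (cases "h u" "h v" rule: linorder_cases) auto
  qed
  have range: "?r v \<in> {1..card V}" if "v \<in> V" for v
  proof -
    have "{u\<in>V. h u \<le> h v} \<noteq> {}" using that by auto
    then have "card {u\<in>V. h u \<le> h v} \<ge> 1" using fin by (simp add: Suc_leI card_gt_0_iff)
    moreover have "card {u\<in>V. h u \<le> h v} \<le> card V" using fin by (intro card_mono) auto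
    ultimately show ?thesis by auto
  qed
  have "?r ` V = {1..card V}"
    using range card_image[OF inj_r] by (intro card_subset_eq) auto
  then have "bij_betw (restrict ?r V) V {1..card V}"
    using inj_r unfolding bij_betw_def by (auto simp: inj_on_def)
  moreover have "\<forall>u\<in>V. \<forall>v\<in>V. (u,v) \<in> R \<longrightarrow> restrict ?r V u < restrict ?r V v"
    using mono h unfolding strict_maps_def by auto
  ultimately show ?thesis unfolding lin_exts_def by auto
qed

lemma rank_in_image:
  assumes "inj_on h V"
  shows "card {u\<in>V. h u \<le> h v} = card {s \<in> h ` V. s \<le> h v}"
proof -
  have "inj_on h {u\<in>V. h u \<le> h v}" using assms by (auto intro: inj_on_subset)
  then have "card {u\<in>V. h u \<le> h v} = card (h ` {u\<in>V. h u \<le> h v})" by (rule card_image[symmetric])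
  also have "h ` {u\<in>V. h u \<le> h v} = {s \<in> h ` V. s \<le> h v}" by auto
  finally show ?thesis .
qed

text \<open>Upper bound for injective maps: such a map is determined by its rank function and image.\<close>
lemma card_injective_strict_maps_le:
  assumes fin: "finite V" and RV: "R \<subseteq> V \<times> V"
  shows "card {h \<in> strict_maps V R k. inj_on h V} \<le> card (lin_exts V R) * (k choose card V)"
proof -
  let ?Sub = "{S. S \<subseteq> {1..k} \<and> card S = card V}"
  let ?I = "{h \<in> strict_maps V R k. inj_on h V}"
  define \<Psi> where "\<Psi> h = (restrict (\<lambda>v. card {u\<in>V. h u \<le> h v}) V, h ` V)" for h :: "'a \<Rightarrow> nat"
  have into: "\<Psi> h \<in> lin_exts V R \<times> ?Sub" if h: "h \<in> ?I" for h
  proof -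
    have "h ` V \<subseteq> {1..k}" using h unfolding strict_maps_def by auto
    moreover have "card (h ` V) = card V" using h by (simp add: card_image)
    ultimately show ?thesis using rank_lin_ext[OF fin _ _ RV, of h k] h unfolding \<Psi>_def by auto
  qed
  have "inj_on \<Psi> ?I"
  proof (rule inj_onI)
    fix h1 h2 assume h1: "h1 \<in> ?I" and h2: "h2 \<in> ?I" and eq: "\<Psi> h1 = \<Psi> h2"
    have S: "h1 ` V = h2 ` V" using eq unfolding \<Psi>_def by simp
    have "h1 v = h2 v" if v: "v \<in> V" for v
    proof (rule rank_inj)
      show "finite (h1 ` V)" "h1 v \<in> h1 ` V" "h2 v \<in> h1 ` V" using fin v S by auto
      have "card {u\<in>V. h1 u \<le> h1 v} = card {u\<in>V. h2 u \<le> h2 v}"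
        using fun_cong[OF arg_cong[OF eq, of fst], of v] v unfolding \<Psi>_def by simp
      then show "card {s \<in> h1 ` V. s \<le> h1 v} = card {s \<in> h1 ` V. s \<le> h2 v}"
        using rank_in_image[of h1 V v] rank_in_image[of h2 V v] h1 h2 S by simp
    qed
    then show "h1 = h2"
      using h1 h2 unfolding strict_maps_def by (auto simp: PiE_iff intro!: extensionalityI)
  qed
  moreover have "finite (lin_exts V R \<times> ?Sub)"
    using finite_lin_exts[OF fin] finite_subset[of ?Sub "Pow {1..k}"] by auto
  ultimately have "card ?I \<le> card (lin_exts V R \<times> ?Sub)"
    using into by (intro card_inj_on_le) blast+
  then show ?thesis by (simp add: card_cartesian_product n_subsets)
qed

text \<open>Maps identifying two given points are determined by their values off one of them.\<close>
lemma card_maps_with_collision: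
  assumes fin: "finite V" and u: "u \<in> V" and uv: "u \<noteq> v"
  shows "card {f \<in> V \<rightarrow>\<^sub>E {1..k}. f u = f v} \<le> k ^ (card V - 1)"
proof -
  let ?A = "{f \<in> V \<rightarrow>\<^sub>E {1..k}. f u = f v}"
  have "inj_on (\<lambda>f. restrict f (V - {u})) ?A"
  proof (rule inj_onI)
    fix f g assume f: "f \<in> ?A" and g: "g \<in> ?A" and eq: "restrict f (V - {u}) = restrict g (V - {u})"
    have "f w = g w" if "w \<in> V" for w
    proof (cases "w = u")
      case True
      show ?thesis
      proof (cases "v \<in> V")
        case True then show ?thesis using f g fun_cong[OF eq, of v] uv \<open>w = u\<close> by auto
      next
        case False then show ?thesis using f g \<open>w = u\<close> by (auto simp: PiE_iff extensional_def)
      qed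
    qed (use fun_cong[OF eq, of w] that in simp)
    then show "f = g" using f g by (auto simp: PiE_iff intro: extensionalityI)
  qed
  moreover have "(\<lambda>f. restrict f (V - {u})) ` ?A \<subseteq> (V - {u}) \<rightarrow>\<^sub>E {1..k}"
    by (rule image_subsetI) (simp add: restrict_PiE_iff PiE_iff)
  moreover have "finite ((V - {u}) \<rightarrow>\<^sub>E {1..k})" using fin by (intro finite_PiE) auto
  ultimately have "card ?A \<le> card ((V - {u}) \<rightarrow>\<^sub>E {1..k})" by (rule card_inj_on_le)
  also have "\<dots> = k ^ (card V - 1)" using fin u by (simp add: card_PiE)
  finally show ?thesis .
qed

lemma card_noninjective_maps_le:
  assumes fin: "finite V"
  shows "card {f \<in> V \<rightarrow>\<^sub>E {1..k}. \<not> inj_on f V} \<le> card V * card V * k ^ (card V - 1)"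
proof -
  let ?A = "\<lambda>u v. {f \<in> V \<rightarrow>\<^sub>E {1..k}. f u = f v}"
  have "{f \<in> V \<rightarrow>\<^sub>E {1..k}. \<not> inj_on f V} \<subseteq> (\<Union>u\<in>V. \<Union>v\<in>V - {u}. ?A u v)"
    unfolding inj_on_def by blast
  moreover have "finite (\<Union>u\<in>V. \<Union>v\<in>V - {u}. ?A u v)"
    by (rule finite_subset[of _ "V \<rightarrow>\<^sub>E {1..k}"]) (use fin in \<open>auto intro: finite_PiE\<close>)
  ultimately have "card {f \<in> V \<rightarrow>\<^sub>E {1..k}. \<not> inj_on f V} \<le> card (\<Union>u\<in>V. \<Union>v\<in>V - {u}. ?A u v)"
    by (rule card_mono[rotated])
  also have "\<dots> \<le> (\<Sum>u\<in>V. \<Sum>v\<in>V - {u}. card (?A u v))"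
    using fin by (intro order_trans[OF card_UN_le] sum_mono card_UN_le) auto
  also have "\<dots> \<le> (\<Sum>u\<in>V. \<Sum>v\<in>V - {u}. k ^ (card V - 1))"
    by (intro sum_mono card_maps_with_collision[OF fin]) auto
  also have "\<dots> \<le> (\<Sum>u\<in>V. \<Sum>v\<in>V. k ^ (card V - 1))"
    using fin by (intro sum_mono sum_mono2) auto
  also have "\<dots> = card V * card V * k ^ (card V - 1)" by simp
  finally show ?thesis .
qed

lemma card_strict_maps_le:
  assumes fin: "finite V" and RV: "R \<subseteq> V \<times> V"
  shows "card (strict_maps V R k)
           \<le> card (lin_exts V R) * (k choose card V) + card V * card V * k ^ (card V - 1)"
proof -
  let ?I = "{h \<in> strict_maps V R k. inj_on h V}"
  let ?N = "{f \<in> V \<rightarrow>\<^sub>E {1..k}. \<not> inj_on f V}"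
  have "finite ?I" "finite ?N"
    using finite_strict_maps[OF fin] fin by (auto intro: finite_subset[OF _ finite_PiE[of V]])
  moreover have "strict_maps V R k \<subseteq> ?I \<union> ?N" unfolding strict_maps_def by auto
  ultimately have "card (strict_maps V R k) \<le> card ?I + card ?N"
    by (meson card_Un_le card_mono finite_UnI order_trans)
  then show ?thesis
    using card_injective_strict_maps_le[OF fin RV, of k] card_noninjective_maps_le[OF fin, of k]
    by linarith
qed

section \<open>Fewer comparabilities, more linear extensions\<close>

text \<open>If every comparability of \<open>R'\<close> is one of \<open>R\<close>, the chain
  polytope of \<open>R\<close> lies inside that of \<open>R'\<close>; comparing lattice point counts through the
  order polytopes gives \<open>e(R) C(k,m) + |X| \<le> e(R') C(k,m) + m\<^sup>2 k\<^bsup>m-1\<^esup>\<close> for every set \<open>X\<close> of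
  points in the chain polytope of \<open>R'\<close> but not of \<open>R\<close>.\<close>
lemma lattice_count_comparison:
  assumes fin: "finite V" and R: "strict_order_on V R" and R': "strict_order_on V R'"
    and comp: "\<And>x y. (x,y) \<in> R' \<Longrightarrow> (x,y) \<in> R \<or> (y,x) \<in> R"
    and X: "X \<subseteq> chain_maps V R' k" "X \<inter> chain_maps V R k = {}"
  shows "card (lin_exts V R) * (k choose card V) + card X
         \<le> card (lin_exts V R') * (k choose card V) + card V * card V * k ^ (card V - 1)"
proof -
  have RV: "R \<subseteq> V \<times> V" and R'V: "R' \<subseteq> V \<times> V" using R R' unfolding strict_order_on_def by auto
  have "card (lin_exts V R) * (k choose card V) + card X \<le> card (strict_maps V R k) + card X"
    using card_lin_exts_binom_le_strict_maps[OF fin RV] by simp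
  also have "\<dots> = card (chain_maps V R k \<union> X)"
    using card_strict_maps_eq_chain_maps[OF fin R] X(2) finite_chain_maps[OF fin]
      finite_subset[OF X(1) finite_chain_maps[OF fin]]
    by (simp add: card_Un_disjoint inf_commute)
  also have "\<dots> \<le> card (chain_maps V R' k)"
    using chain_maps_antimono[OF comp] X(1) finite_chain_maps[OF fin] by (intro card_mono) auto
  also have "\<dots> = card (strict_maps V R' k)" using card_strict_maps_eq_chain_maps[OF fin R'] by simp
  also have "\<dots> \<le> card (lin_exts V R') * (k choose card V) + card V * card V * k ^ (card V - 1)"
    by (rule card_strict_maps_le[OF fin R'V])
  finally show ?thesis .
qed

lemma power_le_binomial:
  assumes "0 < m"
  shows "t ^ m \<le> (m * t) choose m"
proof (cases "t = 0")
  case False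
  then have "(real (m * t) / real m) ^ m \<le> real ((m * t) choose m)"
    by (intro binomial_ge_n_over_k_pow_k) simp
  moreover have "real (m * t) / real m = real t" using assms by simp
  ultimately have "real (t ^ m) \<le> real ((m * t) choose m)" by simp
  then show ?thesis by linarith
qed (use assms in \<open>simp add: power_0_left\<close>)

lemma power_le_mult_power_imp_le:
  fixes t c m :: nat
  assumes "0 < m" and "t ^ m \<le> c * t ^ (m - 1)"
  shows "t \<le> c"
proof (cases "t = 0")
  case False
  obtain j where m: "m = Suc j" using assms(1) by (cases m) auto
  have "t * t ^ j \<le> c * t ^ j" using assms(2) unfolding m by simp
  then show ?thesis using False by simp
qed simp

lemma card_lin_exts_antimono:
  assumes fin: "finite V" and R: "strict_order_on V R" and R': "strict_order_on V R'"
    and comp: "\<And>x y. (x,y) \<in> R' \<Longrightarrow> (x,y) \<in> R \<or> (y,x) \<in> R"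
  shows "card (lin_exts V R) \<le> card (lin_exts V R')"
proof (cases "V = {}")
  case True then show ?thesis by (simp add: lin_exts_def)
next
  case False
  define m where "m = card V"
  have m: "0 < m" using fin False unfolding m_def by auto
  show ?thesis
  proof (rule ccontr)
    assume "\<not> ?thesis"
    then have more: "card (lin_exts V R') + 1 \<le> card (lin_exts V R)" by simp
    have "t \<le> m ^ (m + 1)" for t
    proof (rule power_le_mult_power_imp_le[OF m])
      have "(card (lin_exts V R') + 1) * ((m * t) choose m) \<le> card (lin_exts V R) * ((m * t) choose m)"
        using more by (rule mult_right_mono) simp
      then have "(m * t) choose m \<le> m * m * (m * t) ^ (m - 1)"
        using lattice_count_comparison[OF fin R R' comp, of "{}" "m * t"]
        unfolding m_def by (simp add: algebra_simps)
      then have "t ^ m \<le> m * m * (m * t) ^ (m - 1)" using power_le_binomial[OF m, of t] by linarith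
      also have "m * m * (m * t) ^ (m - 1) = m ^ (m + 1) * t ^ (m - 1)"
      proof -
        obtain j where j: "m = Suc j" using m by (cases m) auto
        then have exps: "m - 1 = j" "m + 1 = Suc (Suc j)" by simp_all
        show ?thesis unfolding exps power_mult_distrib power_Suc by (simp only: mult.assoc)
      qed
      finally show "t ^ m \<le> m ^ (m + 1) * t ^ (m - 1)" .
    qed
    then show False by (metis Suc_n_not_le_n Suc_eq_plus1)
  qed
qed

lemma card_lin_exts_strict_antimono:
  assumes fin: "finite V" and ne: "V \<noteq> {}"
    and R: "strict_order_on V R" and R': "strict_order_on V R'"
    and comp: "\<And>x y. (x,y) \<in> R' \<Longrightarrow> (x,y) \<in> R \<or> (y,x) \<in> R"
    and many: "\<And>t. \<exists>X. X \<subseteq> chain_maps V R' (a * t) \<and> X \<inter> chain_maps V R (a * t) = {}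
                        \<and> t ^ card V \<le> card X"
  shows "card (lin_exts V R) < card (lin_exts V R')"
proof (rule ccontr)
  assume "\<not> ?thesis"
  then have le: "card (lin_exts V R') \<le> card (lin_exts V R)" by simp
  define m where "m = card V"
  have m: "0 < m" using fin ne unfolding m_def by auto
  have "t \<le> m * m * a ^ (m - 1)" for t
  proof (rule power_le_mult_power_imp_le[OF m])
    obtain X where X: "X \<subseteq> chain_maps V R' (a * t)" "X \<inter> chain_maps V R (a * t) = {}"
      "t ^ m \<le> card X"
      using many[of t] unfolding m_def by auto
    have "card (lin_exts V R') * ((a * t) choose m) \<le> card (lin_exts V R) * ((a * t) choose m)"
      using le by (rule mult_right_mono) simp
    then have "t ^ m \<le> m * m * (a * t) ^ (m - 1)"
      using lattice_count_comparison[OF fin R R' comp X(1,2)] X(3) unfolding m_def by linarith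
    then show "t ^ m \<le> m * m * a ^ (m - 1) * t ^ (m - 1)" by (simp add: power_mult_distrib)
  qed
  then show False by (metis Suc_n_not_le_n Suc_eq_plus1)
qed

text \<open>An order embedding of \<open>R\<close> into \<open>R'\<close> by a permutation of \<open>V\<close> pulls linear extensions
  of \<open>R'\<close> back injectively to linear extensions of \<open>R\<close>.\<close>
lemma card_lin_exts_le_of_embedding:
  assumes fin: "finite V" and \<pi>: "bij_betw \<pi> V V"
    and emb: "\<And>u v. u \<in> V \<Longrightarrow> v \<in> V \<Longrightarrow> (u,v) \<in> R \<Longrightarrow> (\<pi> u, \<pi> v) \<in> R'"
  shows "card (lin_exts V R') \<le> card (lin_exts V R)"
proof -
  define T where "T \<sigma> = restrict (\<sigma> \<circ> \<pi>) V" for \<sigma> :: "'a \<Rightarrow> nat"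
  have \<pi>V: "\<pi> u \<in> V" if "u \<in> V" for u using \<pi> that by (rule bij_betw_apply)
  have into: "T \<sigma> \<in> lin_exts V R" if \<sigma>: "\<sigma> \<in> lin_exts V R'" for \<sigma>
  proof -
    have "bij_betw (\<sigma> \<circ> \<pi>) V {1..card V}"
      using bij_betw_trans[OF \<pi>] \<sigma> unfolding lin_exts_def by auto
    then have "bij_betw (T \<sigma>) V {1..card V}"
      unfolding T_def by (rule bij_betw_cong[THEN iffD1, rotated]) simp
    moreover have "\<forall>u\<in>V. \<forall>v\<in>V. (u,v) \<in> R \<longrightarrow> T \<sigma> u < T \<sigma> v"
      using \<sigma> emb \<pi>V unfolding lin_exts_def T_def by auto
    ultimately show ?thesis unfolding lin_exts_def T_def by auto
  qed
  have "inj_on T (lin_exts V R')"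
  proof (rule inj_onI)
    fix \<sigma>1 \<sigma>2 assume \<sigma>: "\<sigma>1 \<in> lin_exts V R'" "\<sigma>2 \<in> lin_exts V R'" and eq: "T \<sigma>1 = T \<sigma>2"
    have "\<sigma>1 w = \<sigma>2 w" if w: "w \<in> V" for w
    proof -
      have "w \<in> \<pi> ` V" using \<pi> w unfolding bij_betw_def by simp
      then obtain u where "u \<in> V" "\<pi> u = w" by blast
      then show ?thesis using fun_cong[OF eq, of u] unfolding T_def by simp
    qed
    then show "\<sigma>1 = \<sigma>2" using \<sigma> unfolding lin_exts_def by (auto intro: extensionalityI)
  qed
  then show ?thesis by (rule card_inj_on_le) (use into finite_lin_exts[OF fin] in auto)
qed

lemma trancl_map:
  assumes "\<And>u v. (u,v) \<in> D \<Longrightarrow> (f u, f v) \<in> D'" and "(u,v) \<in> D\<^sup>+"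
  shows "(f u, f v) \<in> D'\<^sup>+"
  using assms(2) by (induction rule: trancl_induct) (auto intro: trancl_into_trancl assms(1))

section \<open>A separating family of chain-polytope points\<close>

lemma three_comparable:
  assumes steps: "\<And>a b d. (a,b) \<in> R \<Longrightarrow> (b,d) \<in> R \<Longrightarrow> a \<in> T \<and> b \<in> T \<and> d \<in> T"
    and xy: "(x,y) \<in> R \<or> (y,x) \<in> R" and yw: "(y,w) \<in> R \<or> (w,y) \<in> R"
    and xw: "(x,w) \<in> R \<or> (w,x) \<in> R"
  shows "w \<in> T"
  using xy yw xw steps[of x y w] steps[of x w y] steps[of w x y] steps[of y x w] steps[of y w x]
    steps[of w y x]
  by blast

lemma chain_leaving_small:
  assumes steps: "\<And>a b d. (a,b) \<in> R \<Longrightarrow> (b,d) \<in> R \<Longrightarrow> a \<in> T \<and> b \<in> T \<and> d \<in> T"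
    and C: "finite C" "is_chain R C" and w: "w \<in> C" "w \<notin> T"
  shows "card C \<le> 2"
proof (rule ccontr)
  assume "\<not> card C \<le> 2"
  then have two: "2 \<le> card (C - {w})" using C(1) w(1) by simp
  then have "C - {w} \<noteq> {}" by (intro notI) simp
  then obtain x where x: "x \<in> C - {w}" by blast
  have "1 \<le> card (C - {w} - {x})" using two x C(1) by simp
  then have "C - {w} - {x} \<noteq> {}" by (intro notI) simp
  then obtain y where y: "y \<in> C - {w} - {x}" by blast
  have comp: "(a,b) \<in> R \<or> (b,a) \<in> R" if "a \<in> C" "b \<in> C" "a \<noteq> b" for a b
    using C(2) that unfolding is_chain_def by blast
  have "w \<in> T" using three_comparable[OF steps comp comp comp] x y w(1) by blast
  with w(2) show False by simp
qed

text \<open>Maps that are small (\<open>\<le> 5t\<close>) everywhere and tiny (\<open>\<le> t\<close>) at some \<open>w \<in> T\<close> have chain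
  sums at most \<open>12 t\<close> for \<open>R\<close>: chains inside \<open>T\<close> weigh \<open>\<le> t + 2 \<cdot> 5t\<close>, other chains have at
  most two elements.\<close>
lemma light_map_in_chain_maps:
  assumes fin: "finite V" and T: "T \<subseteq> V" "card T \<le> 3" "w \<in> T"
    and steps: "\<And>a b d. (a,b) \<in> R \<Longrightarrow> (b,d) \<in> R \<Longrightarrow> a \<in> T \<and> b \<in> T \<and> d \<in> T"
    and g: "g \<in> V \<rightarrow>\<^sub>E {1..12 * t}" "\<And>v. v \<in> V \<Longrightarrow> g v \<le> 5 * t" "g w \<le> t"
  shows "g \<in> chain_maps V R (12 * t)"
proof -
  have "sum g C \<le> 12 * t" if C: "C \<subseteq> V" "is_chain R C" for C
  proof (cases "C \<subseteq> T")
    case True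
    have "sum g C \<le> sum g T" using True T(1) fin by (intro sum_mono2) (auto intro: finite_subset)
    also have "\<dots> = g w + sum g (T - {w})"
      using T(1,3) fin by (simp add: sum.remove finite_subset)
    also have "sum g (T - {w}) \<le> card (T - {w}) * (5 * t)"
      using sum_bounded_above[of "T - {w}" g "5 * t"] g(2) T(1) by auto
    also have "card (T - {w}) * (5 * t) \<le> 2 * (5 * t)"
      using T(2,3) fin by (intro mult_right_mono) (auto simp: finite_subset[OF T(1)])
    finally show ?thesis using g(3) by simp
  next
    case False
    then obtain w' where "w' \<in> C" "w' \<notin> T" by auto
    moreover have "finite C" using C(1) fin finite_subset by blast
    ultimately have "card C \<le> 2" using chain_leaving_small[OF steps _ C(2)] by blast
    have "sum g C \<le> card C * (5 * t)"
      using sum_bounded_above[of C g "5 * t"] g(2) C(1) by auto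
    also have "\<dots> \<le> 2 * (5 * t)" using \<open>card C \<le> 2\<close> by (rule mult_right_mono) simp
    finally show ?thesis by simp
  qed
  then show ?thesis using g(1) unfolding chain_maps_def by auto
qed

lemma heavy_map_not_in_chain_maps:
  assumes L: "L \<subseteq> V" "card L = 3" "is_chain R L" and heavy: "\<And>v. v \<in> L \<Longrightarrow> 4 * t < g v"
  shows "g \<notin> chain_maps V R (12 * t)"
proof
  assume "g \<in> chain_maps V R (12 * t)"
  then have "sum g L \<le> 12 * t" using L unfolding chain_maps_def by blast
  moreover have "card L * (4 * t + 1) \<le> sum g L"
    using sum_bounded_below[of L "4 * t + 1" g] heavy by (simp add: Suc_le_eq)
  ultimately show False using L(2) by simp
qed

text \<open>The separating family: values in \<open>[4t+1, 5t]\<close> on the chain \<open>L\<close> of \<open>R\<close> and in \<open>[1, t]\<close>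
  elsewhere.\<close>
lemma separating_chain_maps:
  assumes fin: "finite V" and L: "L \<subseteq> V" "card L = 3" "is_chain R L"
    and T: "T \<subseteq> V" "card T \<le> 3" "w \<in> T" "w \<notin> L"
    and steps: "\<And>a b d. (a,b) \<in> R' \<Longrightarrow> (b,d) \<in> R' \<Longrightarrow> a \<in> T \<and> b \<in> T \<and> d \<in> T"
  shows "\<exists>X. X \<subseteq> chain_maps V R' (12 * t) \<and> X \<inter> chain_maps V R (12 * t) = {}
             \<and> t ^ card V \<le> card X"
proof -
  define B where "B v = (if v \<in> L then {4*t+1..5*t} else {1..t})" for v
  define X where "X = PiE V B"
  have inB: "g v \<in> B v" if "g \<in> X" "v \<in> V" for g v
    using that unfolding X_def by (rule PiE_mem)
  have "card X = t ^ card V"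
  proof -
    have "card (B v) = t" for v unfolding B_def by simp
    then show ?thesis unfolding X_def using fin by (simp add: card_PiE)
  qed
  moreover have "X \<subseteq> chain_maps V R' (12 * t)"
  proof
    fix g assume g: "g \<in> X"
    have "g \<in> V \<rightarrow>\<^sub>E {1..12*t}"
      using g unfolding X_def by (rule PiE_mono[THEN subsetD, rotated]) (auto simp: B_def)
    moreover have "g v \<le> 5 * t" if "v \<in> V" for v
      using inB[OF g that] unfolding B_def by (auto split: if_splits)
    moreover have "g w \<le> t" using inB[OF g, of w] T unfolding B_def by auto
    ultimately show "g \<in> chain_maps V R' (12 * t)" using light_map_in_chain_maps[OF fin T(1-3) steps] by blast
  qed
  moreover have "X \<inter> chain_maps V R (12 * t) = {}"
  proof -
    have "g \<notin> chain_maps V R (12 * t)" if g: "g \<in> X" for g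
    proof (rule heavy_map_not_in_chain_maps[OF L])
      fix v assume "v \<in> L"
      then show "4 * t < g v" using inB[OF g, of v] L(1) unfolding B_def by auto
    qed
    then show ?thesis by blast
  qed
  ultimately show ?thesis by (intro exI[of _ X]) simp
qed

lemma unique_2path_steps:
  assumes P: "directed_2paths D = {(a,b,d)}" and irr: "\<And>u v. (u,v) \<in> D \<Longrightarrow> u \<noteq> v" and ad: "a \<noteq> d"
    and xy: "(x,y) \<in> D \<union> {(a,d)}" and yz: "(y,z) \<in> D \<union> {(a,d)}"
  shows "x = a \<and> y = b \<and> z = d"
proof -
  have "(a,b,d) \<in> directed_2paths D" using P by simp
  then have ab: "(a,b) \<in> D" "(b,d) \<in> D" unfolding directed_2paths_def by auto
  have tp: "p = a \<and> q = b \<and> r = d" if "(p,q) \<in> D" "(q,r) \<in> D" for p q r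
  proof -
    have "(p,q,r) \<in> directed_2paths D" using that unfolding directed_2paths_def by simp
    then show ?thesis using P by simp
  qed
  have nab: "a \<noteq> b" "b \<noteq> d" using ab irr by auto
  show ?thesis using xy yz tp[of x y z] tp[of x y b] tp[of b d z] ab nab ad by auto
qed

lemma trancl_unique_2path:
  assumes P: "directed_2paths D = {(a,b,d)}" and irr: "\<And>u v. (u,v) \<in> D \<Longrightarrow> u \<noteq> v" and ad: "a \<noteq> d"
  shows "D\<^sup>+ = D \<union> {(a,d)}"
proof
  have "trans (D \<union> {(a,d)})"
  proof (rule transI)
    fix x y z assume a1: "(x,y) \<in> D \<union> {(a,d)}" and a2: "(y,z) \<in> D \<union> {(a,d)}"
    have "x = a \<and> y = b \<and> z = d" using unique_2path_steps[OF P irr ad a1 a2] .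
    then show "(x,z) \<in> D \<union> {(a,d)}" by simp
  qed
  then have tid: "(D \<union> {(a,d)})\<^sup>+ = D \<union> {(a,d)}" by (rule trancl_id)
  have "D\<^sup>+ \<subseteq> (D \<union> {(a,d)})\<^sup>+" by (rule trancl_mono_subset) auto
  then show "D\<^sup>+ \<subseteq> D \<union> {(a,d)}" using tid by simp
next
  have "(a,b,d) \<in> directed_2paths D" using P by simp
  then have ab: "(a,b) \<in> D" "(b,d) \<in> D" unfolding directed_2paths_def by auto
  then show "D \<union> {(a,d)} \<subseteq> D\<^sup>+" by (auto intro: trancl_into_trancl)
qed

section \<open>The cycle on \<open>m\<close> vertices\<close>

definition nxt :: "nat \<Rightarrow> nat \<Rightarrow> nat" where "nxt m i = Suc i mod m"
definition prv :: "nat \<Rightarrow> nat \<Rightarrow> nat" where "prv m i = (i + m - 1) mod m"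

lemma nxt_if: "i < m \<Longrightarrow> nxt m i = (if Suc i = m then 0 else Suc i)"
  unfolding nxt_def by auto

lemma prv_if: "i < m \<Longrightarrow> prv m i = (if i = 0 then m - 1 else i - 1)"
proof -
  assume i: "i < m"
  show ?thesis
  proof (cases "i = 0")
    case True then show ?thesis using i unfolding prv_def by simp
  next
    case False
    then have "i + m - 1 = (i - 1) + m" by simp
    then have "(i + m - 1) mod m = (i - 1) mod m" by simp
    then show ?thesis using False i unfolding prv_def by simp
  qed
qed

lemma nxt_lt: "0 < m \<Longrightarrow> nxt m i < m" unfolding nxt_def by simp
lemma prv_lt: "0 < m \<Longrightarrow> prv m i < m" unfolding prv_def by simp

lemma nxt_prv: "i < m \<Longrightarrow> nxt m (prv m i) = i"
  by (simp add: nxt_if prv_if prv_lt)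

lemma prv_nxt: "i < m \<Longrightarrow> prv m (nxt m i) = i"
  by (auto simp: nxt_if prv_if nxt_lt)

lemma nxt_neq: "3 \<le> m \<Longrightarrow> i < m \<Longrightarrow> nxt m i \<noteq> i"
  by (auto simp: nxt_if)

lemma prv_neq: "3 \<le> m \<Longrightarrow> i < m \<Longrightarrow> prv m i \<noteq> i"
  by (auto simp: prv_if)

lemma prv_neq_nxt: "3 \<le> m \<Longrightarrow> i < m \<Longrightarrow> prv m i \<noteq> nxt m i"
  by (auto simp: prv_if nxt_if)

lemma nxt_nxt_neq: "3 \<le> m \<Longrightarrow> i < m \<Longrightarrow> nxt m (nxt m i) \<noteq> i"
  by (auto simp: nxt_if)

lemma cycle_edge_iff: "{u,v} \<in> cycle_edges m \<longleftrightarrow> (\<exists>i<m. {u,v} = {i, nxt m i})"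
  unfolding cycle_edges_def nxt_def by auto

lemma orient_edge:
  assumes "is_orientation (cycle_edges m) D" "(u,v) \<in> D" "3 \<le> m"
  shows "u < m \<and> v < m \<and> (v = nxt m u \<or> u = nxt m v)"
proof -
  have "{u,v} \<in> cycle_edges m" using assms(1,2) unfolding is_orientation_def by auto
  then obtain i where i: "i < m" "{u,v} = {i, nxt m i}" using cycle_edge_iff by blast
  have "nxt m i < m" using nxt_lt[of m i] assms(3) by simp
  then show ?thesis using i by (auto simp: doubleton_eq_iff)
qed

lemma orient_asym:
  assumes "is_orientation (cycle_edges m) D" "(u,v) \<in> D"
  shows "(v,u) \<notin> D"
proof -
  have "{u,v} \<in> cycle_edges m" using assms(1,2) unfolding is_orientation_def by auto
  then obtain a b where ab: "{u,v} = {a,b}" "a \<noteq> b"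
    "((a,b) \<in> D \<and> (b,a) \<notin> D) \<or> ((b,a) \<in> D \<and> (a,b) \<notin> D)"
    using assms(1) unfolding is_orientation_def by blast
  then show ?thesis using assms(2) by (auto simp: doubleton_eq_iff)
qed

lemma orient_total:
  assumes "is_orientation (cycle_edges m) D" "i < m"
  shows "(i, nxt m i) \<in> D \<or> (nxt m i, i) \<in> D"
proof -
  have "{i, nxt m i} \<in> cycle_edges m" using assms(2) cycle_edge_iff by blast
  then obtain a b where ab: "{i, nxt m i} = {a,b}"
    "((a,b) \<in> D \<and> (b,a) \<notin> D) \<or> ((b,a) \<in> D \<and> (a,b) \<notin> D)"
    using assms(1) unfolding is_orientation_def by blast
  then show ?thesis by (auto simp: doubleton_eq_iff)
qed

lemma orient_irrefl:
  assumes "is_orientation (cycle_edges m) D" "(u,v) \<in> D" "3 \<le> m"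
  shows "u \<noteq> v"
  using orient_edge[OF assms] nxt_neq[OF assms(3)] by metis

lemma orient_subset:
  assumes "is_orientation (cycle_edges m) D" "3 \<le> m"
  shows "D \<subseteq> {0..<m} \<times> {0..<m}"
  using orient_edge[OF assms(1) _ assms(2)] by auto

lemma orient_neighbour:
  assumes "is_orientation (cycle_edges m) D" "(u,v) \<in> D" "3 \<le> m"
  shows "u = prv m v \<or> u = nxt m v" "v = prv m u \<or> v = nxt m u"
  using orient_edge[OF assms] prv_nxt by auto

lemma two_path_shape:
  assumes "is_orientation (cycle_edges m) D" "3 \<le> m" "(x,y) \<in> D" "(y,z) \<in> D"
  shows "(x = prv m y \<and> z = nxt m y) \<or> (x = nxt m y \<and> z = prv m y)"
proof -
  have "x \<noteq> z" using orient_asym[OF assms(1,3)] assms(4) by auto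
  then show ?thesis using orient_neighbour[OF assms(1,3,2)] orient_neighbour[OF assms(1,4,2)] by auto
qed

definition centres :: "('a \<times> 'a) set \<Rightarrow> 'a set" where
  "centres D = {y. \<exists>x z. (x,y) \<in> D \<and> (y,z) \<in> D}"

lemma centre_less:
  assumes "is_orientation (cycle_edges m) D" and "3 \<le> m" and "c \<in> centres D"
  shows "c < m"
  using assms orient_edge[OF assms(1) _ assms(2)] unfolding centres_def by blast

text \<open>In an orientation of the cycle a directed 2-path is determined by its centre.\<close>
lemma card_directed_2paths:
  assumes "is_orientation (cycle_edges m) D" "3 \<le> m"
  shows "card (directed_2paths D) = card (centres D)"
proof -
  have inj: "inj_on (\<lambda>(x,y,z). y) (directed_2paths D)"
  proof (rule inj_onI)
    fix p q assume p: "p \<in> directed_2paths D" and q: "q \<in> directed_2paths D"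
      and eq: "(\<lambda>(x,y,z). y) p = (\<lambda>(x,y,z). y) q"
    obtain x y z where pp: "p = (x,y,z)" "(x,y) \<in> D" "(y,z) \<in> D" using p unfolding directed_2paths_def by auto
    obtain x' y' z' where qq: "q = (x',y',z')" "(x',y') \<in> D" "(y',z') \<in> D" using q unfolding directed_2paths_def by auto
    have yy: "y' = y" using eq pp qq by simp
    have a: "(x = prv m y \<and> z = nxt m y) \<or> (x = nxt m y \<and> z = prv m y)" using two_path_shape[OF assms pp(2,3)] .
    have b: "(x' = prv m y \<and> z' = nxt m y) \<or> (x' = nxt m y \<and> z' = prv m y)" using two_path_shape[OF assms qq(2,3)] yy by simp
    show "p = q" using a b pp qq yy orient_asym[OF assms(1)] by fastforce
  qed
  have "(\<lambda>(x,y,z). y) ` directed_2paths D = centres D"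
    unfolding directed_2paths_def centres_def by (auto simp: image_iff)
  then show ?thesis using card_image[OF inj] by simp
qed

lemma centre_shape:
  assumes D: "is_orientation (cycle_edges m) D" and m3: "3 \<le> m" and y: "y \<in> centres D"
  shows "((prv m y, y) \<in> D \<and> (y, nxt m y) \<in> D) \<or> ((nxt m y, y) \<in> D \<and> (y, prv m y) \<in> D)"
proof -
  obtain x z where xz: "(x,y) \<in> D" "(y,z) \<in> D" using y unfolding centres_def by auto
  show ?thesis using two_path_shape[OF D m3 xz] xz by auto
qed

lemma centre_iff_same_direction:
  assumes D: "is_orientation (cycle_edges m) D" and m3: "3 \<le> m" and y: "y < m"
  shows "y \<in> centres D \<longleftrightarrow> ((prv m y, nxt m (prv m y)) \<in> D \<longleftrightarrow> (y, nxt m y) \<in> D)"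
proof
  assume "y \<in> centres D"
  from centre_shape[OF D m3 this] show "(prv m y, nxt m (prv m y)) \<in> D \<longleftrightarrow> (y, nxt m y) \<in> D"
    unfolding nxt_prv[OF y] using orient_asym[OF D] by blast
next
  assume same: "(prv m y, nxt m (prv m y)) \<in> D \<longleftrightarrow> (y, nxt m y) \<in> D"
  have py: "prv m y < m" using prv_lt m3 by simp
  show "y \<in> centres D"
  proof (cases "(y, nxt m y) \<in> D")
    case True
    then have "(prv m y, y) \<in> D" using same nxt_prv[OF y] by simp
    with True show ?thesis unfolding centres_def by blast
  next
    case False
    then have "(y, prv m y) \<in> D" using same orient_total[OF D py] nxt_prv[OF y] by auto
    moreover have "(nxt m y, y) \<in> D" using orient_total[OF D y] False by auto
    ultimately show ?thesis unfolding centres_def by blast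
  qed
qed

text \<open>An odd cycle cannot be oriented alternately, so some vertex is a centre.\<close>
lemma odd_orient_has_centre:
  assumes D: "is_orientation (cycle_edges m) D" and m3: "3 \<le> m" and odd: "odd m"
  shows "centres D \<noteq> {}"
proof
  assume none: "centres D = {}"
  define dir where "dir i = ((i, nxt m i) \<in> D)" for i
  have alt: "dir (prv m y) \<noteq> dir y" if "y < m" for y
    using centre_iff_same_direction[OF D m3 that] none unfolding dir_def by auto
  have par: "i < m \<Longrightarrow> dir i = (dir 0 = even i)" for i
  proof (induction i)
    case 0 then show ?case by simp
  next
    case (Suc i)
    have "prv m (Suc i) = i" using Suc.prems by (simp add: prv_if)
    then have "dir i \<noteq> dir (Suc i)" using alt[OF Suc.prems] by simp
    then show ?case using Suc by auto
  qed
  have "prv m 0 = m - 1" using m3 by (simp add: prv_if)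
  moreover have "even (m - 1)" using odd m3 by simp
  ultimately have "dir (prv m 0) = dir 0" using par[of "m - 1"] m3 by simp
  then show False using alt[of 0] m3 by simp
qed

text \<open>An acyclic orientation of the triangle has at most one centre: two centres would make
  all three edges point the same way around, i.e. a directed cycle.\<close>
lemma triangle_unique_centre:
  assumes D: "is_orientation (cycle_edges 3) D" and ac: "acyclic D"
    and c: "c \<in> centres D" and c': "c' \<in> centres D" and ne: "c \<noteq> c'"
  shows False
proof -
  have s: "nxt 3 0 = 1" "nxt 3 1 = 2" "nxt 3 2 = 0" by (simp_all add: nxt_def)
  have p: "prv 3 0 = 2" "prv 3 1 = 0" "prv 3 2 = 1" by (simp_all add: prv_def)
  have lt: "c < 3" "c' < 3" using centre_less[OF D order_refl] c c' by blast+
  define dir where "dir i = ((i, nxt 3 i) \<in> D)" for i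
  have e: "dir (prv 3 y) = dir y" if "y \<in> centres D" for y
  proof -
    have "y < 3" using centre_less[OF D order_refl that] .
    then show ?thesis using centre_iff_same_direction[OF D order_refl] that unfolding dir_def by blast
  qed
  have e0: "dir 2 = dir 0" if "0 \<in> centres D" using e[OF that] p by simp
  have e1: "dir 0 = dir 1" if "1 \<in> centres D" using e[OF that] p by simp
  have e2: "dir 1 = dir 2" if "2 \<in> centres D" using e[OF that] p by simp
  have "c = 0 \<or> c = 1 \<or> c = 2" "c' = 0 \<or> c' = 1 \<or> c' = 2" using lt by auto
  then have all: "dir 0 = dir 1 \<and> dir 1 = dir 2"
  proof (elim disjE)
  qed (use e0 e1 e2 c c' ne in simp_all)
  have o3: "(i, nxt 3 i) \<in> D \<or> (nxt 3 i, i) \<in> D" if "i < 3" for i using orient_total[OF D that] .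
  show False
  proof (cases "dir 0")
    case True
    then have d: "(0,1) \<in> D" "(1,2) \<in> D" "(2,0) \<in> D" using all s unfolding dir_def by auto
    have "(0::nat,1) \<in> D\<^sup>+" using d(1) by (rule r_into_trancl)
    then have "(0::nat,2) \<in> D\<^sup>+" using d(2) by (rule trancl_into_trancl)
    then have "(0::nat,0) \<in> D\<^sup>+" using d(3) by (rule trancl_into_trancl)
    then show False using ac unfolding acyclic_def by blast
  next
    case False
    then have "\<not> dir 0" "\<not> dir 1" "\<not> dir 2" using all by auto
    then have d: "(1,0) \<in> D" "(2,1) \<in> D" "(0,2) \<in> D" using o3[of 0] o3[of 1] o3[of 2] s unfolding dir_def by auto
    have "(0::nat,2) \<in> D\<^sup>+" using d(3) by (rule r_into_trancl)
    then have "(0::nat,1) \<in> D\<^sup>+" using d(2) by (rule trancl_into_trancl)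
    then have "(0::nat,0) \<in> D\<^sup>+" using d(1) by (rule trancl_into_trancl)
    then show False using ac unfolding acyclic_def by blast
  qed
qed

lemma edge_comparable:
  assumes D: "is_orientation (cycle_edges m) D" and i: "i < m"
  shows "(i, nxt m i) \<in> D\<^sup>+ \<or> (nxt m i, i) \<in> D\<^sup>+"
  using orient_total[OF D i] by auto

lemma centre_neighbours_comparable:
  assumes D: "is_orientation (cycle_edges m) D" and m3: "3 \<le> m" and y: "y \<in> centres D"
  shows "(prv m y, nxt m y) \<in> D\<^sup>+ \<or> (nxt m y, prv m y) \<in> D\<^sup>+"
  using centre_shape[OF D m3 y] by (meson trancl.simps)

section \<open>The almost bipartite orientations\<close>

text \<open>\<open>ab_orient m c\<close> directs the edge \<open>{i, nxt m i}\<close> forward iff \<open>i - c\<close> is even modulo \<open>m\<close>; on an odd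
  cycle the only directed 2-path is \<open>prv m c \<rightarrow> c \<rightarrow> nxt m c\<close>.\<close>
definition fwd :: "nat \<Rightarrow> nat \<Rightarrow> nat \<Rightarrow> bool" where
  "fwd m c i = even ((i + m - c) mod m)"

definition ab_orient :: "nat \<Rightarrow> nat \<Rightarrow> (nat \<times> nat) set" where
  "ab_orient m c =
     {(i, nxt m i) | i. i < m \<and> fwd m c i} \<union> {(nxt m i, i) | i. i < m \<and> \<not> fwd m c i}"

lemma ab_orient_iff:
  "(u,v) \<in> ab_orient m c \<longleftrightarrow>
     (u < m \<and> v = nxt m u \<and> fwd m c u) \<or> (v < m \<and> u = nxt m v \<and> \<not> fwd m c v)"
  unfolding ab_orient_def by auto

lemma mod_shift:
  "i < (m::nat) \<Longrightarrow> c < m \<Longrightarrow> (i + m - c) mod m = (if c \<le> i then i - c else i + m - c)"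
proof -
  assume a: "i < m" "c < m"
  show ?thesis
  proof (cases "c \<le> i")
    case True
    then have "i + m - c = (i - c) + m" by arith
    then have "(i + m - c) mod m = (i - c) mod m" by (metis mod_add_self2)
    then show ?thesis using True a by simp
  next
    case False then show ?thesis using a by simp
  qed
qed

lemma mod_add_lt:
  "u < (m::nat) \<Longrightarrow> j < m \<Longrightarrow> (u + j) mod m = (if u + j < m then u + j else u + j - m)"
proof -
  assume a: "u < m" "j < m"
  show ?thesis
  proof (cases "u + j < m")
    case False
    then have "u + j = (u + j - m) + m" by arith
    then have "(u + j) mod m = (u + j - m) mod m" by (metis mod_add_self2)
    then show ?thesis using False a by simp
  qed simp
qed

text \<open>Consecutive edges have equal direction exactly at the vertex \<open>c\<close> (parity wraps around the
  odd cycle there).\<close>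
lemma fwd_prv_iff:
  assumes "y < m" "c < m" "odd m" "3 \<le> m"
  shows "(fwd m c (prv m y) = fwd m c y) \<longleftrightarrow> y = c"
proof -
  have py: "prv m y < m" using prv_lt assms by simp
  have e1: "fwd m c y = even (if c \<le> y then y - c else y + m - c)"
    unfolding fwd_def using mod_shift[OF assms(1,2)] by simp
  have e2: "fwd m c (prv m y) = even (if c \<le> prv m y then prv m y - c else prv m y + m - c)"
    unfolding fwd_def using mod_shift[OF py assms(2)] by simp
  show ?thesis unfolding e1 e2 unfolding prv_if[OF assms(1)] using assms
    by (cases "y = 0"; cases "c \<le> y"; cases "y = c"; simp; presburger)
qed

lemma fwd_centre: "c < m \<Longrightarrow> fwd m c c"
  unfolding fwd_def by simp

lemma ab_orient_is_orientation:
  assumes m3: "3 \<le> m"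
  shows "is_orientation (cycle_edges m) (ab_orient m c)"
  unfolding is_orientation_def
proof (intro conjI ballI)
  fix p assume "p \<in> ab_orient m c"
  then obtain u v where p: "p = (u,v)" "(u,v) \<in> ab_orient m c" by (cases p) auto
  then have "{u,v} \<in> cycle_edges m" unfolding ab_orient_iff cycle_edge_iff by (auto simp: insert_commute)
  then show "case p of (u, v) \<Rightarrow> {u, v} \<in> cycle_edges m" using p by simp
next
  fix e assume "e \<in> cycle_edges m"
  then obtain i where i: "i < m" "e = {i, nxt m i}" unfolding cycle_edges_def nxt_def by auto
  have si: "nxt m i < m" using nxt_lt m3 by simp
  have n1: "nxt m (nxt m i) \<noteq> i" using nxt_nxt_neq[OF m3 i(1)] .
  have "(i, nxt m i) \<in> ab_orient m c \<longleftrightarrow> fwd m c i" unfolding ab_orient_iff using i n1 si by auto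
  moreover have "(nxt m i, i) \<in> ab_orient m c \<longleftrightarrow> \<not> fwd m c i" unfolding ab_orient_iff using i n1 si by auto
  moreover have "i \<noteq> nxt m i" using nxt_neq[OF m3 i(1)] by simp
  ultimately show "\<exists>u v. e = {u, v} \<and> u \<noteq> v \<and>
          ((u, v) \<in> ab_orient m c \<and> (v, u) \<notin> ab_orient m c \<or> (v, u) \<in> ab_orient m c \<and> (u, v) \<notin> ab_orient m c)"
    using i by blast
qed

lemma ab_orient_2paths:
  assumes m3: "3 \<le> m" and odd: "odd m" and c: "c < m"
  shows "directed_2paths (ab_orient m c) = {(prv m c, c, nxt m c)}"
proof
  have D: "is_orientation (cycle_edges m) (ab_orient m c)" by (rule ab_orient_is_orientation[OF m3])
  show "directed_2paths (ab_orient m c) \<subseteq> {(prv m c, c, nxt m c)}"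
  proof
    fix p assume "p \<in> directed_2paths (ab_orient m c)"
    then obtain x y z where p: "p = (x,y,z)" "(x,y) \<in> ab_orient m c" "(y,z) \<in> ab_orient m c"
      unfolding directed_2paths_def by auto
    have y: "y < m" using orient_edge[OF D p(2) m3] by simp
    have py: "prv m y < m" using prv_lt m3 by simp
    have spy: "nxt m (prv m y) = y" using nxt_prv[OF y] .
    have pns: "prv m y \<noteq> nxt m y" using prv_neq_nxt[OF m3 y] .
    have ssn: "nxt m (nxt m y) \<noteq> y" using nxt_nxt_neq[OF m3 y] .
    from two_path_shape[OF D m3 p(2,3)] show "p \<in> {(prv m c, c, nxt m c)}"
    proof
      assume a: "x = prv m y \<and> z = nxt m y"
      then have "fwd m c (prv m y)" "fwd m c y" using p(2,3) pns spy ssn unfolding ab_orient_iff by auto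
      then have "y = c" using fwd_prv_iff[OF y c odd m3] by simp
      then show ?thesis using a p(1) by simp
    next
      assume a: "x = nxt m y \<and> z = prv m y"
      then have "\<not> fwd m c (prv m y)" "\<not> fwd m c y" using p(2,3) pns spy ssn unfolding ab_orient_iff by auto
      then have "y = c" using fwd_prv_iff[OF y c odd m3] by simp
      then show ?thesis using \<open>\<not> fwd m c y\<close> fwd_centre[OF c] by simp
    qed
  qed
next
  have prv: "prv m c < m" using prv_lt m3 by simp
  have "(prv m c, c) \<in> ab_orient m c"
  proof -
    have "fwd m c (prv m c)" using fwd_prv_iff[OF c c odd m3] fwd_centre[OF c] by simp
    then show ?thesis unfolding ab_orient_iff using prv nxt_prv[OF c] by auto
  qed
  moreover have "(c, nxt m c) \<in> ab_orient m c" unfolding ab_orient_iff using c fwd_centre[OF c] by auto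
  ultimately show "{(prv m c, c, nxt m c)} \<subseteq> directed_2paths (ab_orient m c)"
    unfolding directed_2paths_def by auto
qed

lemma ab_orient_trancl:
  assumes m3: "3 \<le> m" and odd: "odd m" and c: "c < m"
  shows "(ab_orient m c)\<^sup>+ = ab_orient m c \<union> {(prv m c, nxt m c)}"
  by (rule trancl_unique_2path[OF ab_orient_2paths[OF m3 odd c]])
    (use orient_irrefl[OF ab_orient_is_orientation[OF m3] _ m3] prv_neq_nxt[OF m3 c] in auto)

lemma ab_orient_acyclic:
  assumes m3: "3 \<le> m" and odd: "odd m" and c: "c < m"
  shows "acyclic (ab_orient m c)"
  unfolding acyclic_def ab_orient_trancl[OF m3 odd c]
  using orient_irrefl[OF ab_orient_is_orientation[OF m3] _ m3] prv_neq_nxt[OF m3 c] by auto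

definition rot :: "nat \<Rightarrow> nat \<Rightarrow> nat \<Rightarrow> nat" where "rot m j x = (x + j) mod m"

lemma rot_bij:
  assumes "j < m"
  shows "bij_betw (rot m j) {0..<m} {0..<m}"
proof -
  have inj: "inj_on (rot m j) {0..<m}"
    by (rule inj_onI) (use assms in \<open>auto simp: rot_def mod_add_lt split: if_splits\<close>)
  moreover have "rot m j ` {0..<m} = {0..<m}"
    using assms card_image[OF inj] by (intro card_subset_eq) (auto simp: rot_def)
  ultimately show ?thesis unfolding bij_betw_def by simp
qed

lemma rot_nxt: "0 < m \<Longrightarrow> rot m j (nxt m u) = nxt m (rot m j u)"
  unfolding rot_def nxt_def by (simp add: mod_add_left_eq mod_Suc_eq)

lemma rot_fwd:
  assumes "u < m" "c < m" "j < m"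
  shows "fwd m ((c + j) mod m) (rot m j u) = fwd m c u"
proof -
  have lt: "rot m j u < m" "(c + j) mod m < m" using assms by (auto simp: rot_def)
  show ?thesis unfolding fwd_def mod_shift[OF lt] mod_shift[OF assms(1,2)]
    unfolding rot_def mod_add_lt[OF assms(1,3)] mod_add_lt[OF assms(2,3)]
    using assms by (auto; presburger)
qed

lemma rot_ab_orient:
  assumes m3: "3 \<le> m" and c: "c < m" and j: "j < m" and uv: "(u,v) \<in> ab_orient m c"
  shows "(rot m j u, rot m j v) \<in> ab_orient m ((c + j) mod m)"
proof -
  have m0: "0 < m" using m3 by simp
  have lt: "rot m j x < m" for x using m0 by (simp add: rot_def)
  from uv consider "u < m" "v = nxt m u" "fwd m c u" | "v < m" "u = nxt m v" "\<not> fwd m c v"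
    unfolding ab_orient_iff by blast
  then show ?thesis
  proof cases
    case 1 then show ?thesis using lt rot_nxt[OF m0] rot_fwd[OF 1(1) c j] by (auto simp: ab_orient_iff)
  next
    case 2 then show ?thesis using lt rot_nxt[OF m0] rot_fwd[OF 2(1) c j] by (auto simp: ab_orient_iff)
  qed
qed

lemma ab_orient_count:
  assumes m3: "3 \<le> m" and c: "c < m" and c': "c' < m"
  shows "num_linear_extensions {0..<m} (ab_orient m c) = num_linear_extensions {0..<m} (ab_orient m c')"
proof -
  have le: "num_linear_extensions {0..<m} (ab_orient m d') \<le> num_linear_extensions {0..<m} (ab_orient m d)"
    if d: "d < m" "d' < m" for d d'
  proof -
    define j where "j = (d' + m - d) mod m"
    have j: "j < m" using d unfolding j_def by simp
    have "(d + j) mod m = (d + (d' + m - d)) mod m" unfolding j_def by (simp add: mod_add_right_eq)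
    also have "\<dots> = d'" using d by simp
    finally have d'_eq: "(d + j) mod m = d'" .
    have "card (lin_exts {0..<m} ((ab_orient m d')\<^sup>+)) \<le> card (lin_exts {0..<m} ((ab_orient m d)\<^sup>+))"
    proof (rule card_lin_exts_le_of_embedding[OF _ rot_bij[OF j]])
      fix u v assume "(u,v) \<in> (ab_orient m d)\<^sup>+"
      then show "(rot m j u, rot m j v) \<in> (ab_orient m d')\<^sup>+"
        using rot_ab_orient[OF m3 d(1) j] d'_eq by (auto intro: trancl_map)
    qed simp
    then show ?thesis unfolding num_linear_extensions_eq .
  qed
  show ?thesis using le[OF c c'] le[OF c' c] by simp
qed

lemma orient_strict_order:
  assumes "is_orientation (cycle_edges m) D" and "acyclic D" and "3 \<le> m"
  shows "strict_order_on {0..<m} (D\<^sup>+)"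
  by (rule strict_order_trancl[OF orient_subset[OF assms(1,3)] assms(2)])

lemma ab_orient_comparable:
  assumes D: "is_orientation (cycle_edges m) D" and m3: "3 \<le> m" and odd: "odd m"
    and c: "c \<in> centres D" and cm: "c < m" and xy: "(x,y) \<in> (ab_orient m c)\<^sup>+"
  shows "(x,y) \<in> D\<^sup>+ \<or> (y,x) \<in> D\<^sup>+"
proof -
  have "(x,y) \<in> ab_orient m c \<or> (x,y) = (prv m c, nxt m c)"
    using xy unfolding ab_orient_trancl[OF m3 odd cm] by auto
  then show ?thesis
  proof
    assume "(x,y) \<in> ab_orient m c"
    then show ?thesis unfolding ab_orient_iff using edge_comparable[OF D] by blast
  next
    assume "(x,y) = (prv m c, nxt m c)"
    then show ?thesis using centre_neighbours_comparable[OF D m3 c] by auto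
  qed
qed

lemma count_le_ab_orient:
  assumes D: "is_orientation (cycle_edges m) D" and ac: "acyclic D" and m3: "3 \<le> m" and odd: "odd m"
    and c: "c \<in> centres D"
  shows "num_linear_extensions {0..<m} D \<le> num_linear_extensions {0..<m} (ab_orient m c)"
proof -
  have cm: "c < m" using centre_less[OF D m3 c] .
  show ?thesis unfolding num_linear_extensions_eq
  proof (rule card_lin_exts_antimono)
    show "strict_order_on {0..<m} (D\<^sup>+)" by (rule orient_strict_order[OF D ac m3])
    show "strict_order_on {0..<m} ((ab_orient m c)\<^sup>+)"
      by (rule orient_strict_order[OF ab_orient_is_orientation[OF m3] ab_orient_acyclic[OF m3 odd cm] m3])
  qed (use ab_orient_comparable[OF D m3 odd c cm] in auto)
qed

text \<open>An almost bipartite orientation with centre \<open>c\<close> has exactly the comparabilities of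
  \<open>ab_orient m c\<close>, hence at least as many linear extensions.\<close>
lemma ab_orient_le_count:
  assumes D: "is_orientation (cycle_edges m) D" and ac: "acyclic D" and m3: "3 \<le> m" and odd: "odd m"
    and P: "directed_2paths D = {(x0,c,z0)}"
  shows "num_linear_extensions {0..<m} (ab_orient m c) \<le> num_linear_extensions {0..<m} D"
proof -
  have "(x0,c,z0) \<in> directed_2paths D" using P by simp
  then have xz: "(x0,c) \<in> D" "(c,z0) \<in> D" unfolding directed_2paths_def by auto
  have cm: "c < m" using xz orient_edge[OF D _ m3] by blast
  have shape: "(x0 = prv m c \<and> z0 = nxt m c) \<or> (x0 = nxt m c \<and> z0 = prv m c)"
    by (rule two_path_shape[OF D m3 xz])
  have "x0 \<noteq> z0" using shape prv_neq_nxt[OF m3 cm] by auto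
  then have Dtr: "D\<^sup>+ = D \<union> {(x0,z0)}"
    by (intro trancl_unique_2path[OF P]) (use orient_irrefl[OF D _ m3] in auto)
  have comparable: "(x,y) \<in> (ab_orient m c)\<^sup>+ \<or> (y,x) \<in> (ab_orient m c)\<^sup>+" if "(x,y) \<in> D\<^sup>+" for x y
  proof -
    from that consider "(x,y) \<in> D" | "(x,y) = (x0,z0)" unfolding Dtr by auto
    then show ?thesis
    proof cases
      case 1
      then have "x < m \<and> y < m \<and> (y = nxt m x \<or> x = nxt m y)" by (rule orient_edge[OF D _ m3])
      then show ?thesis using edge_comparable[OF ab_orient_is_orientation[OF m3]] by blast
    next
      case 2
      moreover have "(prv m c, nxt m c) \<in> (ab_orient m c)\<^sup>+"
        unfolding ab_orient_trancl[OF m3 odd cm] by simp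
      ultimately show ?thesis using shape by auto
    qed
  qed
  show ?thesis unfolding num_linear_extensions_eq
  proof (rule card_lin_exts_antimono)
    show "strict_order_on {0..<m} (D\<^sup>+)" by (rule orient_strict_order[OF D ac m3])
    show "strict_order_on {0..<m} ((ab_orient m c)\<^sup>+)"
      by (rule orient_strict_order[OF ab_orient_is_orientation[OF m3] ab_orient_acyclic[OF m3 odd cm] m3])
  qed (use comparable in auto)
qed

section \<open>Orientations with two centres\<close>

lemma closed_nbhds_differ:
  assumes m5: "5 \<le> m" and c: "c < m" and c': "c' < m" and ne: "c \<noteq> c'"
  shows "\<exists>w \<in> {prv m c, c, nxt m c}. w \<notin> {prv m c', c', nxt m c'}"
proof (rule ccontr)
  assume "\<not> ?thesis"
  then have "prv m c \<in> {prv m c', c', nxt m c'}" "c \<in> {prv m c', c', nxt m c'}"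
    "nxt m c \<in> {prv m c', c', nxt m c'}" by auto
  then show False using m5 c c' ne unfolding prv_if[OF c] nxt_if[OF c] prv_if[OF c'] nxt_if[OF c']
    by (auto split: if_splits)
qed

lemma centre_nbhd_chain:
  assumes D: "is_orientation (cycle_edges m) D" and m3: "3 \<le> m" and c: "c \<in> centres D"
  shows "is_chain (D\<^sup>+) {prv m c, c, nxt m c}" and "card {prv m c, c, nxt m c} = 3"
proof -
  have cm: "c < m" using centre_less[OF D m3 c] .
  from centre_shape[OF D m3 c]
  have "(prv m c, c) \<in> D\<^sup>+ \<and> (c, nxt m c) \<in> D\<^sup>+ \<and> (prv m c, nxt m c) \<in> D\<^sup>+ \<or>
        (nxt m c, c) \<in> D\<^sup>+ \<and> (c, prv m c) \<in> D\<^sup>+ \<and> (nxt m c, prv m c) \<in> D\<^sup>+"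
    by (auto intro: trancl_into_trancl)
  then show "is_chain (D\<^sup>+) {prv m c, c, nxt m c}" unfolding is_chain_def by blast
  show "card {prv m c, c, nxt m c} = 3"
    using prv_neq_nxt[OF m3 cm] prv_neq[OF m3 cm] nxt_neq[OF m3 cm] by auto
qed

text \<open>An acyclic orientation with two centres \<open>c \<noteq> c'\<close> on a cycle of length \<open>\<ge> 5\<close> has strictly
  fewer linear extensions than \<open>ab_orient m c\<close>: the neighbourhood of \<open>c'\<close> is a chain of the
  former but not of the latter, which separates the chain polytopes by \<open>\<Omega>(t\<^sup>m)\<close> lattice points.\<close>
lemma count_less_ab_orient:
  assumes D: "is_orientation (cycle_edges m) D" and ac: "acyclic D" and m5: "5 \<le> m" and odd: "odd m"
    and c: "c \<in> centres D" and c': "c' \<in> centres D" and ne: "c \<noteq> c'"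
  shows "num_linear_extensions {0..<m} D < num_linear_extensions {0..<m} (ab_orient m c)"
proof -
  have m3: "3 \<le> m" using m5 by simp
  have cm: "c < m" and cm': "c' < m" using centre_less[OF D m3] c c' by blast+
  let ?L = "{prv m c', c', nxt m c'}" and ?T = "{prv m c, c, nxt m c}"
  have LV: "?L \<subseteq> {0..<m}" and TV: "?T \<subseteq> {0..<m}" using cm cm' prv_lt[of m] nxt_lt[of m] m3 by auto
  obtain w where w: "w \<in> ?T" "w \<notin> ?L" using closed_nbhds_differ[OF m5 cm cm' ne] by blast
  have steps: "a \<in> ?T \<and> b \<in> ?T \<and> d \<in> ?T"
    if "(a,b) \<in> (ab_orient m c)\<^sup>+" "(b,d) \<in> (ab_orient m c)\<^sup>+" for a b d
  proof -
    have "a = prv m c \<and> b = c \<and> d = nxt m c"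
      using unique_2path_steps[OF ab_orient_2paths[OF m3 odd cm] _ prv_neq_nxt[OF m3 cm]] that
        orient_irrefl[OF ab_orient_is_orientation[OF m3] _ m3]
      unfolding ab_orient_trancl[OF m3 odd cm] by blast
    then show ?thesis by simp
  qed
  show ?thesis unfolding num_linear_extensions_eq
  proof (rule card_lin_exts_strict_antimono)
    show "strict_order_on {0..<m} (D\<^sup>+)" by (rule orient_strict_order[OF D ac m3])
    show "strict_order_on {0..<m} ((ab_orient m c)\<^sup>+)"
      by (rule orient_strict_order[OF ab_orient_is_orientation[OF m3] ab_orient_acyclic[OF m3 odd cm] m3])
    show "\<exists>X. X \<subseteq> chain_maps {0..<m} ((ab_orient m c)\<^sup>+) (12 * t)
            \<and> X \<inter> chain_maps {0..<m} (D\<^sup>+) (12 * t) = {} \<and> t ^ card {0..<m} \<le> card X" for t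
      by (rule separating_chain_maps[OF _ LV centre_nbhd_chain(2,1)[OF D m3 c'] TV _ w steps])
        (auto simp: card_insert_if)
  qed (use m3 ab_orient_comparable[OF D m3 odd c cm] in auto)
qed

lemma almost_bipartite_iff_one_centre:
  assumes "acyclic_orientation (cycle_edges m) D" and "3 \<le> m"
  shows "almost_bipartite (cycle_edges m) D \<longleftrightarrow> card (centres D) = 1"
  using assms card_directed_2paths[of m D]
  unfolding almost_bipartite_def acyclic_orientation_def by auto

text \<open>An acyclic orientation of an odd cycle that is not almost bipartite has at least two
  centres, so it is beaten by an almost bipartite orientation.\<close>
lemma not_almost_bipartite_not_maximal:
  assumes m3: "3 \<le> m" and odd: "odd m" and D: "acyclic_orientation (cycle_edges m) D"
    and not_ab: "\<not> almost_bipartite (cycle_edges m) D"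
  shows "\<exists>D'. acyclic_orientation (cycle_edges m) D'
              \<and> num_linear_extensions {0..<m} D < num_linear_extensions {0..<m} D'"
proof -
  have Dor: "is_orientation (cycle_edges m) D" and ac: "acyclic D"
    using D unfolding acyclic_orientation_def by auto
  obtain c where c: "c \<in> centres D" using odd_orient_has_centre[OF Dor m3 odd] by blast
  have "centres D \<noteq> {c}" using not_ab almost_bipartite_iff_one_centre[OF D m3] by auto
  then obtain c' where c': "c' \<in> centres D" "c' \<noteq> c" using c by blast
  have "m \<noteq> 3" using triangle_unique_centre[OF _ ac c c'(1)] Dor c'(2) by auto
  then have m5: "5 \<le> m" using m3 odd by presburger
  have cm: "c < m" using centre_less[OF Dor m3 c] .
  show ?thesis
  proof (intro exI conjI)
    show "acyclic_orientation (cycle_edges m) (ab_orient m c)"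
      unfolding acyclic_orientation_def
      using ab_orient_is_orientation[OF m3] ab_orient_acyclic[OF m3 odd cm] by simp
    show "num_linear_extensions {0..<m} D < num_linear_extensions {0..<m} (ab_orient m c)"
      using count_less_ab_orient[OF Dor ac m5 odd c c'(1)] c'(2) by simp
  qed
qed

text \<open>Every almost bipartite orientation is maximal: any acyclic orientation is dominated by
  the almost bipartite orientation at one of its centres, and all of these have the same count.\<close>
lemma almost_bipartite_maximal:
  assumes m3: "3 \<le> m" and odd: "odd m" and D: "almost_bipartite (cycle_edges m) D"
    and D': "acyclic_orientation (cycle_edges m) D'"
  shows "num_linear_extensions {0..<m} D' \<le> num_linear_extensions {0..<m} D"
proof -
  have Dor: "is_orientation (cycle_edges m) D" and ac: "acyclic D"
    and "card (directed_2paths D) = 1"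
    using D unfolding almost_bipartite_def acyclic_orientation_def by auto
  then obtain x0 c z0 where P: "directed_2paths D = {(x0, c, z0)}" by (metis card_1_singletonE prod_cases3)
  then have "c \<in> centres D" unfolding directed_2paths_def centres_def by blast
  then have cm: "c < m" by (rule centre_less[OF Dor m3])
  have D'or: "is_orientation (cycle_edges m) D'" and ac': "acyclic D'"
    using D' unfolding acyclic_orientation_def by auto
  obtain c' where c': "c' \<in> centres D'" using odd_orient_has_centre[OF D'or m3 odd] by blast
  then have cm': "c' < m" by (rule centre_less[OF D'or m3])
  have "num_linear_extensions {0..<m} D' \<le> num_linear_extensions {0..<m} (ab_orient m c')"
    by (rule count_le_ab_orient[OF D'or ac' m3 odd c'])
  also have "\<dots> = num_linear_extensions {0..<m} (ab_orient m c)" by (rule ab_orient_count[OF m3 cm' cm])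
  also have "\<dots> \<le> num_linear_extensions {0..<m} D" by (rule ab_orient_le_count[OF Dor ac m3 odd P])
  finally show ?thesis .
qed

theorem theorem2p8:
  fixes n :: nat and D :: "(nat \<times> nat) set"
  assumes "n \<ge> 1"
    and "acyclic_orientation (cycle_edges (2*n+1)) D"
  shows "(\<forall>D'. acyclic_orientation (cycle_edges (2*n+1)) D' \<longrightarrow>
            num_linear_extensions (cycle_vertices (2*n+1)) D'
              \<le> num_linear_extensions (cycle_vertices (2*n+1)) D)
         \<longleftrightarrow> almost_bipartite (cycle_edges (2*n+1)) D"
proof -
  have m3: "3 \<le> 2*n+1" and odd: "odd (2*n+1)" using assms(1) by auto
  show ?thesis unfolding cycle_vertices_def
    using not_almost_bipartite_not_maximal[OF m3 odd assms(2)] almost_bipartite_maximal[OF m3 odd]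
    by (meson leD)
qed

end
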